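(* Let $(X,b,m)$ be a weighted graph satisfying the standing assumptions (C), (B), (M). Let $D\subsetneq X$ be $d_L$-relatively dense, let $\alpha>0$ and $r\in[1,\infty]$. Then there exist $T>0$ and $K\ge 0$ such that the linear control problem $(H,D)$ is $(\alpha,T,r,K)$-controllable.
   Context: A weighted graph $(X,b,m)$ consists of a countable set $X$, a function $m\colon X\to(0,\infty)$ (extended to a measure by $m(A)=\sum_{x\in A}m(x)$), and a symmetric $b\colon X\times X\to[0,\infty)$ with $b(x,x)=0$ and $\sum_{y}b(x,y)<\infty$ for all $x$. A path is a finite sequence $(x_0,\dots,x_k)$ with $b(x_j,x_{j+1})>0$ for all $j$. Standing assumptions: (C) $(X,b,m)$ is connected (any two distinct points are joined by a path); (B) $D_{\max}:=\sup_{x\in X}\operatorname{Deg}(x)<\infty$ where $\operatorname{Deg}(x)=\frac{1}{m(x)}\sum_{y}b(x,y)$; (M) $\sup_x m(x)<\infty$. The length of a path $\gamma=(x_0,\dots,x_k)$ is $L(\gamma)=\sum_{j=0}^{k-1}1/b(x_j,x_{j+1})$, and the length metric is $d_L(x,y)=\inf\{L(\gamma):\gamma \text{ path from } x \text{ to } y\}$ for $x\ne y$, $d_L(x,x)=0$. For a metric $d$, $B_R(x)=\{y:d(x,y)\le R\}$; $D\subseteq X$ is $d$-relatively dense if $\inf\{R>0:\bigcup_{x\in D}B_R(x)=X\}<\infty$. The weighted Laplacian on $\ell_2(X,m)$ (inner product $\langle f,g\rangle=\sum_x f(x)\overline{g(x)}m(x)$) is the bounded non-negative self-adjoint operator $Hf(x)=\frac{1}{m(x)}\sum_y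 b(x,y)(f(x)-f(y))$, and $S_t=e^{-tH}$. For $D\subseteq X$, $\mathbf 1_D\colon\ell_2(D,m|_D)\to\ell_2(X,m)$ is extension by zero. The control problem $(H,D)$ is $\dot f(t)=-Hf(t)+\mathbf 1_Du(t)$, $f(0)=f_0\in\ell_2(X,m)$, with mild solution $f(t)=S_tf_0+\int_0^tS_{t-\tau}\mathbf 1_Du(\tau)\,d\tau$. For $T>0$, $\alpha,K\ge0$, $r\in[1,\infty]$, $(H,D)$ is $(\alpha,T,r,K)$-controllable if for every $f_0\in\ell_2(X,m)$ there is $u\in L_r((0,T);\ell_2(D,m|_D))$ (extended by zero) with $\|u\|_{L_r((0,T);\ell_2(D,m|_D))}\le K\|f_0\|$ and $\|f(T)\|\le\alpha\|f_0\|$. *)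

theory Defs
  imports "HOL-Analysis.Analysis" "HOL-Probability.Essential_Supremum"
begin

text \<open>Only the values of b and m on X matter.\<close>

definition weighted_graph :: "'a set \<Rightarrow> ('a \<Rightarrow> 'a \<Rightarrow> real) \<Rightarrow> ('a \<Rightarrow> real) \<Rightarrow> bool" where
  "weighted_graph X b m \<longleftrightarrow>
     countable X \<and>
     (\<forall>x\<in>X. 0 < m x) \<and>
     (\<forall>x\<in>X. \<forall>y\<in>X. 0 \<le> b x y \<and> b x y = b y x) \<and>
     (\<forall>x\<in>X. b x x = 0) \<and>
     (\<forall>x\<in>X. (\<lambda>y. b x y) summable_on X)"

definition is_path :: "'a set \<Rightarrow> ('a \<Rightarrow> 'a \<Rightarrow> real) \<Rightarrow> 'a list \<Rightarrow> bool" where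
  "is_path X b xs \<longleftrightarrow> xs \<noteq> [] \<and> set xs \<subseteq> X \<and>
     (\<forall>i. Suc i < length xs \<longrightarrow> 0 < b (xs ! i) (xs ! Suc i))"

definition path_from_to :: "'a set \<Rightarrow> ('a \<Rightarrow> 'a \<Rightarrow> real) \<Rightarrow> 'a \<Rightarrow> 'a \<Rightarrow> 'a list \<Rightarrow> bool" where
  "path_from_to X b x y xs \<longleftrightarrow> is_path X b xs \<and> hd xs = x \<and> last xs = y"

definition graph_connected :: "'a set \<Rightarrow> ('a \<Rightarrow> 'a \<Rightarrow> real) \<Rightarrow> bool" where
  "graph_connected X b \<longleftrightarrow>
     (\<forall>x\<in>X. \<forall>y\<in>X. x \<noteq> y \<longrightarrow> (\<exists>xs. path_from_to X b x y xs))"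

definition Deg :: "'a set \<Rightarrow> ('a \<Rightarrow> 'a \<Rightarrow> real) \<Rightarrow> ('a \<Rightarrow> real) \<Rightarrow> 'a \<Rightarrow> real" where
  "Deg X b m x = (\<Sum>\<^sub>\<infinity>y\<in>X. b x y) / m x"

definition bounded_degree :: "'a set \<Rightarrow> ('a \<Rightarrow> 'a \<Rightarrow> real) \<Rightarrow> ('a \<Rightarrow> real) \<Rightarrow> bool" where
  "bounded_degree X b m \<longleftrightarrow> (\<exists>C. \<forall>x\<in>X. Deg X b m x \<le> C)"

definition bounded_measure :: "'a set \<Rightarrow> ('a \<Rightarrow> real) \<Rightarrow> bool" where
  "bounded_measure X m \<longleftrightarrow> (\<exists>C. \<forall>x\<in>X. m x \<le> C)"

definition path_length :: "('a \<Rightarrow> 'a \<Rightarrow> real) \<Rightarrow> 'a list \<Rightarrow> real" where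
  "path_length b xs = (\<Sum>i<length xs - 1. 1 / b (xs ! i) (xs ! Suc i))"

definition dL :: "'a set \<Rightarrow> ('a \<Rightarrow> 'a \<Rightarrow> real) \<Rightarrow> 'a \<Rightarrow> 'a \<Rightarrow> real" where
  "dL X b x y = (if x = y then 0
                 else Inf {path_length b xs | xs. path_from_to X b x y xs})"

definition closed_ball_in :: "'a set \<Rightarrow> ('a \<Rightarrow> 'a \<Rightarrow> real) \<Rightarrow> 'a \<Rightarrow> real \<Rightarrow> 'a set" where
  "closed_ball_in X d x R = {y\<in>X. d x y \<le> R}"

text \<open>D is d-relatively dense iff inf{R>0 : union of R-balls around D covers X} < oo,
  i.e. iff some R > 0 works.\<close>
definition relatively_dense :: "'a set \<Rightarrow> ('a \<Rightarrow> 'a \<Rightarrow> real) \<Rightarrow> 'a set \<Rightarrow> bool" where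
  "relatively_dense X d D \<longleftrightarrow> (\<exists>R>0. (\<Union>x\<in>D. closed_ball_in X d x R) = X)"

definition enn_powr :: "ennreal \<Rightarrow> real \<Rightarrow> ennreal" where
  "enn_powr x p = (if x = \<infinity> then \<infinity> else ennreal (enn2real x powr p))"

text \<open>Norm of f in l2(A, m|A) (value oo if f is not in l2).\<close>
definition l2norm :: "('a \<Rightarrow> real) \<Rightarrow> 'a set \<Rightarrow> ('a \<Rightarrow> complex) \<Rightarrow> ennreal" where
  "l2norm m A f = enn_powr (\<integral>\<^sup>+x. ennreal (m x * (cmod (f x))\<^sup>2) \<partial>count_space A) (1/2)"

definition in_l2 :: "('a \<Rightarrow> real) \<Rightarrow> 'a set \<Rightarrow> ('a \<Rightarrow> complex) \<Rightarrow> bool" where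
  "in_l2 m A f \<longleftrightarrow> l2norm m A f < \<infinity>"

definition Lap :: "'a set \<Rightarrow> ('a \<Rightarrow> 'a \<Rightarrow> real) \<Rightarrow> ('a \<Rightarrow> real) \<Rightarrow> ('a \<Rightarrow> complex) \<Rightarrow> 'a \<Rightarrow> complex" where
  "Lap X b m f = (\<lambda>x. complex_of_real (1 / m x) *
                        (\<Sum>\<^sub>\<infinity>y\<in>X. complex_of_real (b x y) * (f x - f y)))"

text \<open>S_t = exp(-tH), given (H bounded) by the norm-convergent exponential series;
  evaluated pointwise (point evaluations are continuous on l2).\<close>
definition heat_sg :: "'a set \<Rightarrow> ('a \<Rightarrow> 'a \<Rightarrow> real) \<Rightarrow> ('a \<Rightarrow> real) \<Rightarrow> real \<Rightarrow> ('a \<Rightarrow> complex) \<Rightarrow> 'a \<Rightarrow> complex" where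
  "heat_sg X b m t f = (\<lambda>x. \<Sum>n. complex_of_real ((- t) ^ n / fact n) * ((Lap X b m ^^ n) f) x)"

definition ext0 :: "'a set \<Rightarrow> ('a \<Rightarrow> complex) \<Rightarrow> 'a \<Rightarrow> complex" where
  "ext0 D v = (\<lambda>x. if x \<in> D then v x else 0)"

text \<open>Mild solution f(t) = S_t f0 + int_0^t S_(t-tau) 1_D u(tau) dtau
  (the l2-valued Bochner integral, evaluated pointwise).\<close>
definition mild_sol :: "'a set \<Rightarrow> ('a \<Rightarrow> 'a \<Rightarrow> real) \<Rightarrow> ('a \<Rightarrow> real) \<Rightarrow> 'a set \<Rightarrow>
    ('a \<Rightarrow> complex) \<Rightarrow> (real \<Rightarrow> 'a \<Rightarrow> complex) \<Rightarrow> real \<Rightarrow> 'a \<Rightarrow> complex" where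
  "mild_sol X b m D f0 u t = (\<lambda>x. heat_sg X b m t f0 x +
      (LINT \<tau>:{0<..<t}|lborel. heat_sg X b m (t - \<tau>) (ext0 D (u \<tau>)) x))"

definition Lr_norm :: "ennreal \<Rightarrow> real \<Rightarrow> (real \<Rightarrow> ennreal) \<Rightarrow> ennreal" where
  "Lr_norm r T g =
     (if r = \<infinity> then esssup (restrict_space lborel {0<..<T}) g
      else enn_powr (\<integral>\<^sup>+\<tau>\<in>{0<..<T}. enn_powr (g \<tau>) (enn2real r) \<partial>lborel) (1 / enn2real r))"

text \<open>A control u in L_r((0,T); l2(D,m|D)) is
  represented by u : real => 'a => complex, whose values are read only on D and (0,T);
  (strong) measurability is measurability of every coordinate (l2(D) is separable),
  and finiteness of the L_r norm is implied by the required bound.\<close>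
definition controllable :: "'a set \<Rightarrow> ('a \<Rightarrow> 'a \<Rightarrow> real) \<Rightarrow> ('a \<Rightarrow> real) \<Rightarrow> 'a set \<Rightarrow>
    real \<Rightarrow> real \<Rightarrow> ennreal \<Rightarrow> real \<Rightarrow> bool" where
  "controllable X b m D \<alpha> T r K \<longleftrightarrow>
     (\<forall>f0. in_l2 m X f0 \<longrightarrow>
        (\<exists>u :: real \<Rightarrow> 'a \<Rightarrow> complex.
           (\<forall>x\<in>D. (\<lambda>\<tau>. u \<tau> x) \<in> borel_measurable lborel) \<and>
           Lr_norm r T (\<lambda>\<tau>. l2norm m D (u \<tau>)) \<le> ennreal K * l2norm m X f0 \<and>
           l2norm m X (mild_sol X b m D f0 u T) \<le> ennreal \<alpha> * l2norm m X f0))"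

end

theory Submission
  imports Defs
begin

text \<open>With \<open>A = H + 1\<^sub>D\<close>, the feedback control \<open>u(t) = -1\<^sub>D exp(-t A) f\<^sub>0\<close> turns the mild
  solution into \<open>exp(-t A) f\<^sub>0\<close> (Duhamel's formula), and its \<open>L\<^sub>r\<close> cost up to time \<open>T\<close> is at
  most \<open>exp(T \<parallel>A\<parallel>) max 1 T \<parallel>f\<^sub>0\<parallel>\<close>.  So it suffices that \<open>\<parallel>exp(-T A)\<parallel> \<le> \<alpha>\<close> for some \<open>T\<close>,
  which holds once \<open>A\<close> is coercive.  Coercivity follows from a Poincare inequality
  \<open>\<parallel>f\<parallel>\<^sup>2 \<le> C (\<langle>H f, f\<rangle> + \<parallel>1\<^sub>D f\<parallel>\<^sup>2)\<close>: by relative density every vertex is joined to \<open>D\<close> by a path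
  of \<open>d\<^sub>L\<close>-length below a fixed \<open>R\<close>, so each of its edges has weight at least \<open>1/R\<close>, and
  bounded degree and bounded measure bound its number of edges.  The mass of \<open>f\<close> is then
  controlled layer by layer outward from \<open>D\<close>, each step costing one edge term of the energy.\<close>

section \<open>The real Hilbert space \<open>\<ell>\<^sup>2\<close> of an arbitrary type\<close>

typedef 'a ell2 = "{f :: 'a \<Rightarrow> complex. (\<lambda>x. (cmod (f x))\<^sup>2) summable_on UNIV}"
  morphisms ell2_apply Abs_ell2
  by (rule exI[of _ "\<lambda>_. 0"]) auto

setup_lifting type_definition_ell2

lemma summable_on_ell2_sq: "(\<lambda>x. (cmod (ell2_apply v x))\<^sup>2) summable_on A"
  using ell2_apply[of v] summable_on_subset_banach by blast

lemma power2_add_le: "(a + b)\<^sup>2 \<le> 2 * a\<^sup>2 + 2 * (b::real)\<^sup>2"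
  using sum_squares_bound[of a b] by (simp add: power2_sum)

lemma power2_norm_add_le: "(norm (x + y))\<^sup>2 \<le> 2 * (norm x)\<^sup>2 + 2 * (norm y)\<^sup>2"
proof -
  have "(norm (x + y))\<^sup>2 \<le> (norm x + norm y)\<^sup>2"
    by (simp add: power_mono norm_triangle_ineq)
  also have "\<dots> \<le> 2 * (norm x)\<^sup>2 + 2 * (norm y)\<^sup>2" by (rule power2_add_le)
  finally show ?thesis .
qed

lemma summable_on_cmod_sq_add:
  assumes "(\<lambda>x. (cmod (f x))\<^sup>2) summable_on A" "(\<lambda>x. (cmod (g x))\<^sup>2) summable_on A"
  shows "(\<lambda>x. (cmod (f x + g x))\<^sup>2) summable_on A"
proof (rule summable_on_comparison_test)
  show "(\<lambda>x. 2 * (cmod (f x))\<^sup>2 + 2 * (cmod (g x))\<^sup>2) summable_on A"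
    using assms by (intro summable_on_add summable_on_cmult_right)
qed (auto intro: power2_norm_add_le)

lemma summable_on_cmod_sq_mult:
  assumes "(\<lambda>x. (cmod (f x))\<^sup>2) summable_on A"
  shows "(\<lambda>x. (cmod (c * f x))\<^sup>2) summable_on A"
  using summable_on_cmult_right[OF assms, of "(cmod c)\<^sup>2"]
  by (simp add: norm_mult power_mult_distrib)

instantiation ell2 :: (type) real_vector
begin
lift_definition zero_ell2 :: "'a ell2" is "\<lambda>_. 0" by simp
lift_definition plus_ell2 :: "'a ell2 \<Rightarrow> 'a ell2 \<Rightarrow> 'a ell2" is "\<lambda>f g x. f x + g x"
  by (rule summable_on_cmod_sq_add)
lift_definition uminus_ell2 :: "'a ell2 \<Rightarrow> 'a ell2" is "\<lambda>f x. - f x" by simp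
lift_definition minus_ell2 :: "'a ell2 \<Rightarrow> 'a ell2 \<Rightarrow> 'a ell2" is "\<lambda>f g x. f x - g x"
  using summable_on_cmod_sq_add[of _ UNIV "\<lambda>x. - _ x"] by simp
lift_definition scaleR_ell2 :: "real \<Rightarrow> 'a ell2 \<Rightarrow> 'a ell2" is "\<lambda>r f x. complex_of_real r * f x"
  by (rule summable_on_cmod_sq_mult)
instance
  by standard (transfer; auto simp: algebra_simps fun_eq_iff)+
end

lemma ell2_apply_zero [simp]: "ell2_apply 0 = (\<lambda>_. 0)" by transfer simp
lemma ell2_apply_plus [simp]: "ell2_apply (v + w) x = ell2_apply v x + ell2_apply w x" by transfer simp
lemma ell2_apply_minus [simp]: "ell2_apply (v - w) x = ell2_apply v x - ell2_apply w x" by transfer simp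
lemma ell2_apply_uminus [simp]: "ell2_apply (- v) x = - ell2_apply v x" by transfer simp
lemma ell2_apply_scaleR [simp]: "ell2_apply (r *\<^sub>R v) x = complex_of_real r * ell2_apply v x"
  by transfer simp

lemma ell2_eqI: "(\<And>x. ell2_apply v x = ell2_apply w x) \<Longrightarrow> v = w"
  by (metis ell2_apply_inject ext)

lemma summable_on_ell2_inner: "(\<lambda>x. Re (ell2_apply v x * cnj (ell2_apply w x))) summable_on A"
proof -
  have "(\<lambda>x. norm (Re (ell2_apply v x * cnj (ell2_apply w x)))) summable_on A"
  proof (rule summable_on_comparison_test)
    show "(\<lambda>x. ((cmod (ell2_apply v x))\<^sup>2 + (cmod (ell2_apply w x))\<^sup>2) / 2) summable_on A"
      using summable_on_cmult_right[OF summable_on_add[OF summable_on_ell2_sq summable_on_ell2_sq], of "1/2"]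
      by simp
    show "norm (Re (ell2_apply v x * cnj (ell2_apply w x)))
        \<le> ((cmod (ell2_apply v x))\<^sup>2 + (cmod (ell2_apply w x))\<^sup>2) / 2" for x
      using abs_Re_le_cmod[of "ell2_apply v x * cnj (ell2_apply w x)"]
        sum_squares_bound[of "cmod (ell2_apply v x)" "cmod (ell2_apply w x)"]
      by (simp add: norm_mult)
  qed auto
  thus ?thesis by (rule abs_summable_summable)
qed

instantiation ell2 :: (type) real_inner
begin
definition inner_ell2 :: "'a ell2 \<Rightarrow> 'a ell2 \<Rightarrow> real" where
  "inner_ell2 v w = (\<Sum>\<^sub>\<infinity>x. Re (ell2_apply v x * cnj (ell2_apply w x)))"
definition norm_ell2 :: "'a ell2 \<Rightarrow> real" where
  "norm_ell2 v = sqrt (\<Sum>\<^sub>\<infinity>x. (cmod (ell2_apply v x))\<^sup>2)"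
definition dist_ell2 :: "'a ell2 \<Rightarrow> 'a ell2 \<Rightarrow> real" where
  "dist_ell2 v w = norm (v - w)"
definition sgn_ell2 :: "'a ell2 \<Rightarrow> 'a ell2" where
  "sgn_ell2 v = v /\<^sub>R norm v"
definition uniformity_ell2 :: "('a ell2 \<times> 'a ell2) filter" where
  "uniformity_ell2 = (INF e\<in>{0<..}. principal {(x, y). dist x y < e})"
definition open_ell2 :: "'a ell2 set \<Rightarrow> bool" where
  "open_ell2 U \<longleftrightarrow> (\<forall>x\<in>U. \<forall>\<^sub>F (x', y) in uniformity. x' = x \<longrightarrow> y \<in> U)"
instance
proof
  fix v w u :: "'a ell2" and r :: real
  have inner_self: "Re (ell2_apply v x * cnj (ell2_apply v x)) = (cmod (ell2_apply v x))\<^sup>2" for x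
    by (simp add: complex_norm_square[symmetric])
  show "inner v w = inner w v"
    unfolding inner_ell2_def by (rule infsum_cong) (simp add: mult.commute)
  have "(\<lambda>x. Re (ell2_apply (v + w) x * cnj (ell2_apply u x)))
      = (\<lambda>x. Re (ell2_apply v x * cnj (ell2_apply u x)) + Re (ell2_apply w x * cnj (ell2_apply u x)))"
    by (simp add: fun_eq_iff algebra_simps)
  thus "inner (v + w) u = inner v u + inner w u"
    unfolding inner_ell2_def by (simp only: infsum_add summable_on_ell2_inner)
  have "(\<lambda>x. Re (ell2_apply (r *\<^sub>R v) x * cnj (ell2_apply w x)))
      = (\<lambda>x. r * Re (ell2_apply v x * cnj (ell2_apply w x)))"
    by (simp add: fun_eq_iff algebra_simps)
  thus "inner (r *\<^sub>R v) w = r * inner v w"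
    unfolding inner_ell2_def by (simp only: infsum_cmult_right summable_on_ell2_inner)
  show "0 \<le> inner v v"
    unfolding inner_ell2_def inner_self by (rule infsum_nonneg) auto
  show "inner v v = 0 \<longleftrightarrow> v = 0"
  proof
    assume "inner v v = 0"
    hence "(\<Sum>\<^sub>\<infinity>x. (cmod (ell2_apply v x))\<^sup>2) = 0"
      unfolding inner_ell2_def inner_self .
    hence "(cmod (ell2_apply v x))\<^sup>2 = 0" for x
      using nonneg_infsum_le_0D[OF _ summable_on_ell2_sq[of v UNIV], of x] by auto
    thus "v = 0" by (intro ell2_eqI) simp
  qed (simp add: inner_ell2_def)
  show "norm v = sqrt (inner v v)"
    unfolding inner_ell2_def norm_ell2_def inner_self ..
qed (simp_all add: dist_ell2_def sgn_ell2_def uniformity_ell2_def open_ell2_def)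
end

lemma power2_norm_ell2: "(norm v)\<^sup>2 = (\<Sum>\<^sub>\<infinity>x. (cmod (ell2_apply v x))\<^sup>2)"
  unfolding norm_ell2_def by (simp add: infsum_nonneg)

lemma sum_cmod_sq_le_norm_ell2:
  assumes "finite A"
  shows "(\<Sum>x\<in>A. (cmod (ell2_apply v x))\<^sup>2) \<le> (norm v)\<^sup>2"
  unfolding power2_norm_ell2
  by (rule finite_sum_le_infsum) (auto simp: summable_on_ell2_sq assms)

lemma norm_ell2_apply_le: "cmod (ell2_apply v x) \<le> norm v"
  using sum_cmod_sq_le_norm_ell2[of "{x}" v] by (simp add: power2_le_iff_abs_le)

lemma bounded_linear_ell2_apply: "bounded_linear (\<lambda>v. ell2_apply v x)"
  by (rule bounded_linear_intro[of _ 1]) (auto simp: norm_ell2_apply_le scaleR_conv_of_real)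

lemma Cauchy_ell2_tail:
  fixes F :: "nat \<Rightarrow> 'a ell2"
  assumes "Cauchy F" and lim: "\<And>x. (\<lambda>n. ell2_apply (F n) x) \<longlonglongrightarrow> G x" and "e > 0"
  obtains N where "\<And>n. n \<ge> N \<Longrightarrow> (\<lambda>x. (cmod (G x - ell2_apply (F n) x))\<^sup>2) summable_on UNIV"
    and "\<And>n. n \<ge> N \<Longrightarrow> (\<Sum>\<^sub>\<infinity>x. (cmod (G x - ell2_apply (F n) x))\<^sup>2) \<le> e\<^sup>2"
proof -
  obtain N where N: "\<And>k n. k \<ge> N \<Longrightarrow> n \<ge> N \<Longrightarrow> norm (F k - F n) < e"
    using CauchyD[OF assms(1,3)] by blast
  have finite_sums: "(\<Sum>x\<in>A. (cmod (G x - ell2_apply (F n) x))\<^sup>2) \<le> e\<^sup>2"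
    if "finite A" "n \<ge> N" for A n
  proof (rule LIMSEQ_le_const2)
    show "(\<lambda>k. \<Sum>x\<in>A. (cmod (ell2_apply (F k) x - ell2_apply (F n) x))\<^sup>2)
        \<longlonglongrightarrow> (\<Sum>x\<in>A. (cmod (G x - ell2_apply (F n) x))\<^sup>2)"
      by (intro tendsto_intros lim)
    have "(\<Sum>x\<in>A. (cmod (ell2_apply (F k) x - ell2_apply (F n) x))\<^sup>2) \<le> e\<^sup>2" if "k \<ge> N" for k
      using sum_cmod_sq_le_norm_ell2[OF \<open>finite A\<close>, of "F k - F n"]
        power_mono[OF less_imp_le[OF N[OF that \<open>n \<ge> N\<close>]], of 2]
      by simp
    thus "\<exists>N. \<forall>k\<ge>N. (\<Sum>x\<in>A. (cmod (ell2_apply (F k) x - ell2_apply (F n) x))\<^sup>2) \<le> e\<^sup>2"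
      by blast
  qed
  have summable: "(\<lambda>x. (cmod (G x - ell2_apply (F n) x))\<^sup>2) summable_on UNIV" if "n \<ge> N" for n
    by (rule nonneg_bdd_above_summable_on) (auto intro!: bdd_aboveI[of _ "e\<^sup>2"] finite_sums that)
  show ?thesis
  proof (rule that[OF summable])
    show "(\<Sum>\<^sub>\<infinity>x. (cmod (G x - ell2_apply (F n) x))\<^sup>2) \<le> e\<^sup>2" if "n \<ge> N" for n
      by (rule infsum_le_finite_sums[OF summable[OF that]]) (auto intro: finite_sums that)
  qed
qed

instance ell2 :: (type) banach
proof
  fix F :: "nat \<Rightarrow> 'a ell2"
  assume F: "Cauchy F"
  define G where "G x = lim (\<lambda>n. ell2_apply (F n) x)" for x
  have "Cauchy (\<lambda>n. ell2_apply (F n) x)" for x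
    using bounded_linear.Cauchy[OF bounded_linear_ell2_apply F] .
  hence G: "(\<lambda>n. ell2_apply (F n) x) \<longlonglongrightarrow> G x" for x
    unfolding G_def by (simp add: Cauchy_convergent_iff convergent_LIMSEQ_iff)
  obtain N1 where "\<And>n. n \<ge> N1 \<Longrightarrow> (\<lambda>x. (cmod (G x - ell2_apply (F n) x))\<^sup>2) summable_on UNIV"
    by (rule Cauchy_ell2_tail[OF F G zero_less_one]) blast
  hence "(\<lambda>x. (cmod (G x))\<^sup>2) summable_on UNIV"
    using summable_on_cmod_sq_add[OF _ summable_on_ell2_sq[of "F N1"]] by fastforce
  hence ell2_G: "ell2_apply (Abs_ell2 G) = G" by (simp add: Abs_ell2_inverse)
  have "F \<longlonglongrightarrow> Abs_ell2 G"
  proof (rule LIMSEQ_I)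
    fix r :: real assume "r > 0"
    obtain N where N: "\<And>n. n \<ge> N \<Longrightarrow> (\<Sum>\<^sub>\<infinity>x. (cmod (G x - ell2_apply (F n) x))\<^sup>2) \<le> (r/2)\<^sup>2"
      by (rule Cauchy_ell2_tail[OF F G, of "r/2"]) (use \<open>r > 0\<close> in auto)
    have "norm (F n - Abs_ell2 G) < r" if "n \<ge> N" for n
    proof -
      have "(norm (F n - Abs_ell2 G))\<^sup>2 \<le> (r/2)\<^sup>2"
        using N[OF that] unfolding power2_norm_ell2 by (simp add: ell2_G norm_minus_commute)
      thus ?thesis using \<open>r > 0\<close> by (simp add: power2_le_iff_abs_le)
    qed
    thus "\<exists>N. \<forall>n\<ge>N. norm (F n - Abs_ell2 G) < r" by blast
  qed
  thus "convergent F" by (auto simp: convergent_def)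
qed

section \<open>Bounded operators on \<open>\<ell>\<^sup>2\<close> as a Banach algebra\<close>

definition ell2_basis :: "'a \<Rightarrow> 'a ell2" where
  "ell2_basis a = Abs_ell2 (\<lambda>x. if x = a then 1 else 0)"

lemma ell2_apply_basis: "ell2_apply (ell2_basis a) = (\<lambda>x. if x = a then 1 else 0)"
proof -
  have "(\<lambda>x. (cmod (if x = a then 1 else 0::complex))\<^sup>2) summable_on UNIV"
    by (rule finite_nonzero_values_imp_summable_on) (auto simp: finite_subset[of _ "{a}"])
  thus ?thesis unfolding ell2_basis_def by (simp add: Abs_ell2_inverse)
qed

lemma ell2_basis_nonzero: "ell2_basis a \<noteq> 0"
  by (metis ell2_apply_basis ell2_apply_zero zero_neq_one)

lemma norm_id_blinfun_ell2: "norm (id_blinfun :: 'a ell2 \<Rightarrow>\<^sub>L 'a ell2) = 1"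
proof (rule antisym)
  show "norm (id_blinfun :: 'a ell2 \<Rightarrow>\<^sub>L 'a ell2) \<le> 1" by (rule norm_blinfun_id_le)
  fix a :: 'a
  have "norm (ell2_basis a) \<le> norm (id_blinfun :: 'a ell2 \<Rightarrow>\<^sub>L 'a ell2) * norm (ell2_basis a)"
    using norm_blinfun[of id_blinfun "ell2_basis a"] by simp
  thus "1 \<le> norm (id_blinfun :: 'a ell2 \<Rightarrow>\<^sub>L 'a ell2)"
    using ell2_basis_nonzero[of a] by simp
qed

text \<open>The library's bounded linear maps carry no multiplication; wrapping them in a type of
  their own makes composition a product, so that the exponential series \<^const>\<open>exp\<close> of an
  operator is available.\<close>

typedef 'a ell2_op = "UNIV :: ('a ell2 \<Rightarrow>\<^sub>L 'a ell2) set"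
  morphisms op_blinfun Abs_op by auto

abbreviation op_apply :: "'a ell2_op \<Rightarrow> 'a ell2 \<Rightarrow> 'a ell2" where
  "op_apply A \<equiv> blinfun_apply (op_blinfun A)"

lemma op_blinfun_Abs_op [simp]: "op_blinfun (Abs_op A) = A"
  by (simp add: Abs_op_inverse)

lemma op_eq_iff: "A = B \<longleftrightarrow> op_blinfun A = op_blinfun B"
  by (simp add: op_blinfun_inject)

instantiation ell2_op :: (type) real_normed_algebra_1
begin
definition "zero_ell2_op = Abs_op 0"
definition "plus_ell2_op A B = Abs_op (op_blinfun A + op_blinfun B)"
definition "minus_ell2_op A B = Abs_op (op_blinfun A - op_blinfun B)"
definition "uminus_ell2_op A = Abs_op (- op_blinfun A)"
definition "scaleR_ell2_op r A = Abs_op (r *\<^sub>R op_blinfun A)"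
definition "times_ell2_op A B = Abs_op (op_blinfun A o\<^sub>L op_blinfun B)"
definition "one_ell2_op = Abs_op id_blinfun"
definition "norm_ell2_op A = norm (op_blinfun A)"
definition "dist_ell2_op (A::'a ell2_op) B = norm (op_blinfun A - op_blinfun B)"
definition "sgn_ell2_op (A::'a ell2_op) = Abs_op (inverse (norm (op_blinfun A)) *\<^sub>R op_blinfun A)"
definition uniformity_ell2_op :: "('a ell2_op \<times> 'a ell2_op) filter" where
  "uniformity_ell2_op = (INF e\<in>{0<..}. principal {(x, y). dist x y < e})"
definition open_ell2_op :: "'a ell2_op set \<Rightarrow> bool" where
  "open_ell2_op U \<longleftrightarrow> (\<forall>x\<in>U. \<forall>\<^sub>F (x', y) in uniformity. x' = x \<longrightarrow> y \<in> U)"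

lemma op_blinfun_simps:
  "op_blinfun 0 = 0" "op_blinfun (A + B) = op_blinfun A + op_blinfun B"
  "op_blinfun (A - B) = op_blinfun A - op_blinfun B" "op_blinfun (- A) = - op_blinfun A"
  "op_blinfun (r *\<^sub>R A) = r *\<^sub>R op_blinfun A" "op_blinfun (A * B) = op_blinfun A o\<^sub>L op_blinfun B"
  "op_blinfun 1 = id_blinfun"
  by (simp_all add: zero_ell2_op_def plus_ell2_op_def minus_ell2_op_def uminus_ell2_op_def
      scaleR_ell2_op_def times_ell2_op_def one_ell2_op_def)

instance
proof
  fix a b c :: "'a ell2_op" and r s :: real
  show "a + b + c = a + (b + c)" by (simp add: op_eq_iff op_blinfun_simps algebra_simps)
  show "a + b = b + a" by (simp add: op_eq_iff op_blinfun_simps algebra_simps)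
  show "0 + a = a" by (simp add: op_eq_iff op_blinfun_simps)
  show "- a + a = 0" by (simp add: op_eq_iff op_blinfun_simps)
  show "a - b = a + - b" by (simp add: op_eq_iff op_blinfun_simps)
  show "r *\<^sub>R (a + b) = r *\<^sub>R a + r *\<^sub>R b" by (simp add: op_eq_iff op_blinfun_simps algebra_simps)
  show "(r + s) *\<^sub>R a = r *\<^sub>R a + s *\<^sub>R a" by (simp add: op_eq_iff op_blinfun_simps algebra_simps)
  show "r *\<^sub>R s *\<^sub>R a = (r * s) *\<^sub>R a" by (simp add: op_eq_iff op_blinfun_simps)
  show "1 *\<^sub>R a = a" by (simp add: op_eq_iff op_blinfun_simps)
  show "a * b * c = a * (b * c)"
    by (auto simp: op_eq_iff op_blinfun_simps intro!: blinfun_eqI)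
  show "(a + b) * c = a * c + b * c" "a * (b + c) = a * b + a * c"
    "r *\<^sub>R a * b = r *\<^sub>R (a * b)" "a * r *\<^sub>R b = r *\<^sub>R (a * b)"
    by (auto simp: op_eq_iff op_blinfun_simps blinfun.bilinear_simps intro!: blinfun_eqI)
  show "1 * a = a" "a * 1 = a" by (auto simp: op_eq_iff op_blinfun_simps intro!: blinfun_eqI)
  show "norm a = 0 \<longleftrightarrow> a = 0" by (simp add: norm_ell2_op_def op_eq_iff op_blinfun_simps)
  show "norm (a + b) \<le> norm a + norm b"
    by (simp add: norm_ell2_op_def op_blinfun_simps norm_triangle_ineq)
  show "norm (r *\<^sub>R a) = \<bar>r\<bar> * norm a" by (simp add: norm_ell2_op_def op_blinfun_simps)
  show "sgn a = inverse (norm a) *\<^sub>R a"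
    by (simp add: sgn_ell2_op_def op_eq_iff op_blinfun_simps norm_ell2_op_def)
  show "norm (a * b) \<le> norm a * norm b"
    by (simp add: norm_ell2_op_def op_blinfun_simps norm_blinfun_compose)
  show norm_one: "norm (1::'a ell2_op) = 1"
    by (simp add: norm_ell2_op_def op_blinfun_simps norm_id_blinfun_ell2)
  show "(0::'a ell2_op) \<noteq> 1"
    using norm_one by (metis norm_ell2_op_def op_blinfun_simps(1) norm_zero zero_neq_one)
qed (simp_all add: dist_ell2_op_def norm_ell2_op_def op_blinfun_simps uniformity_ell2_op_def
    open_ell2_op_def)
end

instance ell2_op :: (type) banach
proof
  fix F :: "nat \<Rightarrow> 'a ell2_op"
  have dist_eq: "dist A B = dist (op_blinfun A) (op_blinfun B)" for A B :: "'a ell2_op"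
    by (simp add: dist_norm norm_ell2_op_def op_blinfun_simps)
  assume "Cauchy F"
  hence "Cauchy (\<lambda>n. op_blinfun (F n))"
    unfolding Cauchy_def by (simp add: dist_eq)
  then obtain L where "(\<lambda>n. op_blinfun (F n)) \<longlonglongrightarrow> L"
    using Cauchy_convergent_iff convergent_def by blast
  hence "F \<longlonglongrightarrow> Abs_op L"
    unfolding lim_sequentially by (simp add: dist_eq)
  thus "convergent F" by (auto simp: convergent_def)
qed

lemma op_apply_simps:
  "op_apply (A + B) v = op_apply A v + op_apply B v"
  "op_apply (A - B) v = op_apply A v - op_apply B v"
  "op_apply (- A) v = - op_apply A v"
  "op_apply (r *\<^sub>R A) v = r *\<^sub>R op_apply A v"
  "op_apply 0 v = 0"
  "op_apply (A * B) v = op_apply A (op_apply B v)"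
  "op_apply 1 v = v"
  by (simp_all add: op_blinfun_simps blinfun.bilinear_simps)

lemma norm_op_apply_le: "norm (op_apply A v) \<le> norm A * norm v"
  by (simp add: norm_ell2_op_def norm_blinfun)

lemma bounded_linear_op_apply_left: "bounded_linear (\<lambda>A. op_apply A v)"
  by (rule bounded_linear_intro[of _ "norm v"]) (simp_all add: op_apply_simps norm_op_apply_le)

definition op_of :: "('a ell2 \<Rightarrow> 'a ell2) \<Rightarrow> 'a ell2_op" where
  "op_of f = Abs_op (Blinfun f)"

lemma op_apply_op_of: "bounded_linear f \<Longrightarrow> op_apply (op_of f) v = f v"
  by (simp add: op_of_def bounded_linear_Blinfun_apply)

definition ell2_restrict :: "'a set \<Rightarrow> 'a ell2 \<Rightarrow> 'a ell2" where
  "ell2_restrict S v = Abs_ell2 (\<lambda>x. if x \<in> S then ell2_apply v x else 0)"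

lemma ell2_apply_restrict: "ell2_apply (ell2_restrict S v) x = (if x \<in> S then ell2_apply v x else 0)"
proof -
  have "(\<lambda>x. (cmod (if x \<in> S then ell2_apply v x else 0))\<^sup>2) summable_on UNIV"
    by (rule summable_on_comparison_test[OF summable_on_ell2_sq[of v]]) auto
  thus ?thesis unfolding ell2_restrict_def by (simp add: Abs_ell2_inverse)
qed

lemma power2_norm_restrict: "(norm (ell2_restrict S v))\<^sup>2 = (\<Sum>\<^sub>\<infinity>x\<in>S. (cmod (ell2_apply v x))\<^sup>2)"
  unfolding power2_norm_ell2 ell2_apply_restrict
  by (rule infsum_cong_neutral) auto

lemma norm_restrict_le: "norm (ell2_restrict S v) \<le> norm v"
proof -
  have "(norm (ell2_restrict S v))\<^sup>2 \<le> (norm v)\<^sup>2"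
    unfolding power2_norm_ell2 ell2_apply_restrict
    by (rule infsum_mono)
      (auto simp: summable_on_ell2_sq intro: summable_on_comparison_test[OF summable_on_ell2_sq[of v]])
  thus ?thesis by (simp add: power2_le_iff_abs_le)
qed

lemma bounded_linear_restrict: "bounded_linear (ell2_restrict S)"
  by (rule bounded_linear_intro[of _ 1])
    (auto intro!: ell2_eqI simp: ell2_apply_restrict norm_restrict_le)

lemma inner_restrict_self: "inner (ell2_restrict S v) v = (\<Sum>\<^sub>\<infinity>x\<in>S. (cmod (ell2_apply v x))\<^sup>2)"
  unfolding inner_ell2_def ell2_apply_restrict
  by (rule infsum_cong_neutral) (auto simp: complex_norm_square[symmetric])

lemma power2_norm_split:
  "(norm v)\<^sup>2 = (\<Sum>\<^sub>\<infinity>x\<in>S. (cmod (ell2_apply v x))\<^sup>2) + (\<Sum>\<^sub>\<infinity>x\<in>-S. (cmod (ell2_apply v x))\<^sup>2)"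
proof -
  have "(\<Sum>\<^sub>\<infinity>x\<in>S \<union> -S. (cmod (ell2_apply v x))\<^sup>2)
      = (\<Sum>\<^sub>\<infinity>x\<in>S. (cmod (ell2_apply v x))\<^sup>2) + (\<Sum>\<^sub>\<infinity>x\<in>-S. (cmod (ell2_apply v x))\<^sup>2)"
    by (rule infsum_Un_disjoint) (auto simp: summable_on_ell2_sq)
  thus ?thesis by (simp add: power2_norm_ell2)
qed

definition proj_op :: "'a set \<Rightarrow> 'a ell2_op" where
  "proj_op S = op_of (ell2_restrict S)"

lemma op_apply_proj_op: "op_apply (proj_op S) v = ell2_restrict S v"
  by (simp add: proj_op_def op_apply_op_of bounded_linear_restrict)

lemma op_apply_exp_scaleR_fixed:
  fixes Y :: "'a ell2_op"
  assumes "op_apply Y w = 0"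
  shows "op_apply (exp (t *\<^sub>R Y)) w = w"
proof -
  have "(\<lambda>n. op_apply ((t *\<^sub>R Y) ^ n /\<^sub>R fact n) w) sums op_apply (exp (t *\<^sub>R Y)) w"
    by (rule bounded_linear.sums[OF bounded_linear_op_apply_left exp_converges])
  moreover have "op_apply ((t *\<^sub>R Y) ^ n /\<^sub>R fact n) w = (if n = 0 then w else 0)" for n
  proof (cases n)
    case (Suc k)
    have "op_apply (Y ^ Suc k) w = 0"
      by (simp only: power_Suc2 op_apply_simps assms) (simp add: blinfun.zero_right)
    thus ?thesis using Suc by (simp add: scaleR_power op_apply_simps)
  qed (simp add: op_apply_simps)
  ultimately have "(\<lambda>n. if n = 0 then w else 0) sums op_apply (exp (t *\<^sub>R Y)) w" by simp
  moreover have "(\<lambda>n. if n = 0 then w else 0) sums w" using sums_single[of 0 "\<lambda>_. w"] by simp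
  ultimately show ?thesis using sums_unique2 by blast
qed

lemma continuous_on_exp_scaleR [continuous_intros]:
  fixes Y :: "'b::{real_normed_algebra_1,banach}"
  assumes "continuous_on S f"
  shows "continuous_on S (\<lambda>t. exp (f t *\<^sub>R Y))"
proof -
  have "continuous_on UNIV (\<lambda>t. exp (t *\<^sub>R Y))"
    by (rule continuous_on_vector_derivative) (rule exp_scaleR_has_vector_derivative_right)
  thus ?thesis using continuous_on_compose2[OF _ assms] by blast
qed

text \<open>The derivative behind Duhamel's formula for the perturbation \<open>H + P\<close> of \<open>H\<close>.\<close>

lemma has_vector_derivative_exp_perturbation:
  fixes H P :: "'b::{real_normed_algebra_1,banach}"
  shows "((\<lambda>\<tau>. exp ((\<tau> - T) *\<^sub>R H) * exp ((-\<tau>) *\<^sub>R (H + P))) has_vector_derivative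
      - (exp ((\<tau> - T) *\<^sub>R H) * P * exp ((-\<tau>) *\<^sub>R (H + P)))) (at \<tau> within S)"
proof -
  have eq: "exp ((\<tau> - T) *\<^sub>R H) = exp ((-T) *\<^sub>R H) * exp (\<tau> *\<^sub>R H)" for \<tau>
    by (simp add: exp_add_commuting[symmetric] scaleR_add_left algebra_simps)
  have "((\<lambda>\<tau>. exp ((-T) *\<^sub>R H) * exp (\<tau> *\<^sub>R H)) has_vector_derivative
      exp ((-T) *\<^sub>R H) * (exp (\<tau> *\<^sub>R H) * H)) (at \<tau> within S)"
    by (intro has_vector_derivative_mult_right exp_scaleR_has_vector_derivative_right)
  moreover have "((\<lambda>\<tau>. exp (\<tau> *\<^sub>R (- (H + P)))) has_vector_derivative
      (- (H + P)) * exp (\<tau> *\<^sub>R (- (H + P)))) (at \<tau> within S)"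
    by (rule has_vector_derivative_at_within[OF exp_scaleR_has_vector_derivative_left])
  ultimately have "((\<lambda>\<tau>. exp ((-T) *\<^sub>R H) * exp (\<tau> *\<^sub>R H) * exp (\<tau> *\<^sub>R (- (H + P))))
      has_vector_derivative exp ((-T) *\<^sub>R H) * exp (\<tau> *\<^sub>R H) * ((- (H + P)) * exp (\<tau> *\<^sub>R (- (H + P))))
        + exp ((-T) *\<^sub>R H) * (exp (\<tau> *\<^sub>R H) * H) * exp (\<tau> *\<^sub>R (- (H + P)))) (at \<tau> within S)"
    by (rule has_vector_derivative_mult)
  thus ?thesis unfolding eq by (simp add: algebra_simps)
qed

lemma infsum_swap_nonneg:
  fixes F :: "'a \<Rightarrow> 'b \<Rightarrow> real"
  assumes nonneg: "\<And>x y. x \<in> A \<Longrightarrow> y \<in> B \<Longrightarrow> 0 \<le> F x y"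
    and rows: "\<And>x. x \<in> A \<Longrightarrow> F x summable_on B"
    and row_sums: "(\<lambda>x. \<Sum>\<^sub>\<infinity>y\<in>B. F x y) summable_on A"
  shows "(\<lambda>y. \<Sum>\<^sub>\<infinity>x\<in>A. F x y) summable_on B"
    and "(\<Sum>\<^sub>\<infinity>x\<in>A. \<Sum>\<^sub>\<infinity>y\<in>B. F x y) = (\<Sum>\<^sub>\<infinity>y\<in>B. \<Sum>\<^sub>\<infinity>x\<in>A. F x y)"
proof -
  have row_norms: "(\<lambda>y. norm (F x y)) summable_on B" if "x \<in> A" for x
    using rows[OF that] summable_on_iff_abs_summable_on_real by blast
  have norm_row_sums: "norm (\<Sum>\<^sub>\<infinity>y\<in>B. norm (F x y)) = (\<Sum>\<^sub>\<infinity>y\<in>B. F x y)" if "x \<in> A" for x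
  proof -
    have "(\<Sum>\<^sub>\<infinity>y\<in>B. norm (F x y)) = (\<Sum>\<^sub>\<infinity>y\<in>B. F x y)"
      by (rule infsum_cong) (simp add: nonneg that)
    moreover have "0 \<le> (\<Sum>\<^sub>\<infinity>y\<in>B. norm (F x y))" by (rule infsum_nonneg) simp
    ultimately show ?thesis by simp
  qed
  have "(\<lambda>x. norm (\<Sum>\<^sub>\<infinity>y\<in>B. norm (F x y))) summable_on A"
    by (rule summable_on_cong[THEN iffD2, OF norm_row_sums row_sums])
  hence "(\<lambda>z. norm ((\<lambda>(x, y). F x y) z)) summable_on (A \<times> B)"
    by (intro Infinite_Sum.abs_summable_on_Sigma_iff[THEN iffD2] conjI ballI) (simp_all add: row_norms[unfolded real_norm_def])
  hence prod: "(\<lambda>(x, y). F x y) summable_on (A \<times> B)"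
    by (rule abs_summable_summable)
  hence "(\<lambda>(y, x). F x y) summable_on (B \<times> A)"
    by (subst (asm) summable_on_swap) simp
  thus "(\<lambda>y. \<Sum>\<^sub>\<infinity>x\<in>A. F x y) summable_on B"
    by (rule summable_on_Sigma_banach)
  show "(\<Sum>\<^sub>\<infinity>x\<in>A. \<Sum>\<^sub>\<infinity>y\<in>B. F x y) = (\<Sum>\<^sub>\<infinity>y\<in>B. \<Sum>\<^sub>\<infinity>x\<in>A. F x y)"
    by (rule infsum_swap_banach[OF prod])
qed

lemma power2_le_mult_of_amgm:
  fixes L S Q :: real
  assumes "0 \<le> L" "0 \<le> S" "0 \<le> Q"
    and amgm: "\<And>t. t > 0 \<Longrightarrow> L \<le> (t/2) * S + Q / (2*t)"
  shows "L\<^sup>2 \<le> S * Q"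
proof (cases "L = 0")
  case False
  hence L: "L > 0" using assms by simp
  show ?thesis
  proof (cases "Q > 0")
    case True
    have "L \<le> (Q / L / 2) * S + Q / (2 * (Q / L))"
      using amgm[of "Q / L"] True L by simp
    also have "Q / (2 * (Q / L)) = L / 2" using True L by (simp add: field_simps)
    finally have "L * L \<le> Q * S" using L by (simp add: field_simps)
    thus ?thesis by (simp add: power2_eq_square mult.commute)
  next
    case False
    hence "Q = 0" using assms by simp
    hence "L \<le> L / (S + 1) / 2 * S"
      using amgm[of "L / (S + 1)"] L assms by simp
    also have "\<dots> = L * S / (2 * (S + 1))" using assms by (simp add: field_simps)
    also have "\<dots> < L"
      using mult_strict_left_mono[of S "2 * (S + 1)" L] L assms by (simp add: divide_less_eq)
    finally show ?thesis by simp
  qed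
qed (use assms in simp)

lemma weighted_cauchy_schwarz_infsum:
  fixes a c :: "'a \<Rightarrow> real"
  assumes nonneg: "\<And>y. y \<in> A \<Longrightarrow> 0 \<le> a y" and sa: "a summable_on A"
    and sc: "(\<lambda>y. a y * (c y)\<^sup>2) summable_on A"
  shows "(\<lambda>y. a y * \<bar>c y\<bar>) summable_on A"
    and "(\<Sum>\<^sub>\<infinity>y\<in>A. a y * \<bar>c y\<bar>)\<^sup>2 \<le> (\<Sum>\<^sub>\<infinity>y\<in>A. a y) * (\<Sum>\<^sub>\<infinity>y\<in>A. a y * (c y)\<^sup>2)"
proof -
  have amgm: "a y * \<bar>c y\<bar> \<le> (t/2) * a y + (1/(2*t)) * (a y * (c y)\<^sup>2)" if "y \<in> A" "t > 0" for y t
  proof -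
    have "\<bar>c y\<bar> * (2*t) \<le> t\<^sup>2 + (c y)\<^sup>2"
      using sum_squares_bound[of t "\<bar>c y\<bar>"] by (simp add: algebra_simps)
    hence "\<bar>c y\<bar> \<le> t/2 + (c y)\<^sup>2 / (2*t)" using \<open>t > 0\<close> by (simp add: field_simps power2_eq_square)
    from mult_left_mono[OF this nonneg[OF \<open>y \<in> A\<close>]] show ?thesis by (simp add: algebra_simps)
  qed
  have bound_summable: "(\<lambda>y. (t/2) * a y + (1/(2*t)) * (a y * (c y)\<^sup>2)) summable_on A" for t
    by (intro summable_on_add summable_on_cmult_right sa sc)
  show S: "(\<lambda>y. a y * \<bar>c y\<bar>) summable_on A"
    by (rule summable_on_comparison_test[OF bound_summable[of 1]]) (use amgm[of _ 1] nonneg in auto)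
  show "(\<Sum>\<^sub>\<infinity>y\<in>A. a y * \<bar>c y\<bar>)\<^sup>2 \<le> (\<Sum>\<^sub>\<infinity>y\<in>A. a y) * (\<Sum>\<^sub>\<infinity>y\<in>A. a y * (c y)\<^sup>2)"
  proof (rule power2_le_mult_of_amgm)
    show "0 \<le> (\<Sum>\<^sub>\<infinity>y\<in>A. a y * \<bar>c y\<bar>)" "0 \<le> (\<Sum>\<^sub>\<infinity>y\<in>A. a y)" "0 \<le> (\<Sum>\<^sub>\<infinity>y\<in>A. a y * (c y)\<^sup>2)"
      by (auto intro!: infsum_nonneg mult_nonneg_nonneg nonneg)
    fix t :: real assume t: "t > 0"
    have "(\<Sum>\<^sub>\<infinity>y\<in>A. a y * \<bar>c y\<bar>) \<le> (\<Sum>\<^sub>\<infinity>y\<in>A. (t/2) * a y + (1/(2*t)) * (a y * (c y)\<^sup>2))"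
      by (rule infsum_mono[OF S bound_summable]) (use amgm t in auto)
    also have "\<dots> = (\<Sum>\<^sub>\<infinity>y\<in>A. (t/2) * a y) + (\<Sum>\<^sub>\<infinity>y\<in>A. (1/(2*t)) * (a y * (c y)\<^sup>2))"
      by (rule infsum_add) (intro summable_on_cmult_right sa sc)+
    also have "\<dots> = (t/2) * (\<Sum>\<^sub>\<infinity>y\<in>A. a y) + (1/(2*t)) * (\<Sum>\<^sub>\<infinity>y\<in>A. a y * (c y)\<^sup>2)"
      by (simp only: infsum_cmult_right[OF sa] infsum_cmult_right[OF sc])
    finally show "(\<Sum>\<^sub>\<infinity>y\<in>A. a y * \<bar>c y\<bar>) \<le> (t/2) * (\<Sum>\<^sub>\<infinity>y\<in>A. a y) + (\<Sum>\<^sub>\<infinity>y\<in>A. a y * (c y)\<^sup>2) / (2*t)"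
      by simp
  qed
qed

lemma nn_integral_count_space_infsum:
  fixes g :: "'a \<Rightarrow> real"
  assumes nonneg: "\<And>x. x \<in> A \<Longrightarrow> 0 \<le> g x" and "g summable_on A"
  shows "(\<integral>\<^sup>+x. ennreal (g x) \<partial>count_space A) = ennreal (\<Sum>\<^sub>\<infinity>x\<in>A. g x)"
proof -
  have "(\<lambda>x. norm (g x)) summable_on A"
    using assms summable_on_iff_abs_summable_on_real by blast
  hence int: "integrable (count_space A) g"
    using abs_summable_equivalent[of g A] unfolding abs_summable_on_def by simp
  have "(\<integral>\<^sup>+x. ennreal (g x) \<partial>count_space A) = ennreal (integral\<^sup>L (count_space A) g)"
    by (rule nn_integral_eq_integral[OF int]) (use nonneg in \<open>auto simp: AE_count_space\<close>)
  also have "integral\<^sup>L (count_space A) g = (\<Sum>\<^sub>\<infinity>x\<in>A. g x)"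
    using int by (simp add: infsetsum_def[symmetric] infsetsum_infsum abs_summable_on_def)
  finally show ?thesis .
qed

lemma nn_integral_count_space_not_summable:
  fixes g :: "'a \<Rightarrow> real"
  assumes nonneg: "\<And>x. x \<in> A \<Longrightarrow> 0 \<le> g x" and "\<not> g summable_on A"
  shows "(\<integral>\<^sup>+x. ennreal (g x) \<partial>count_space A) = \<infinity>"
proof (rule ccontr)
  assume "(\<integral>\<^sup>+x. ennreal (g x) \<partial>count_space A) \<noteq> \<infinity>"
  hence "(\<integral>\<^sup>+x. ennreal (norm (g x)) \<partial>count_space A) < \<infinity>"
    using nonneg by (subst nn_integral_cong[where v = "\<lambda>x. ennreal (g x)"])
      (auto simp: top.not_eq_extremum)
  hence "integrable (count_space A) g"
    by (subst integrable_iff_bounded) auto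
  hence "(\<lambda>x. norm (g x)) summable_on A"
    using abs_summable_equivalent[of g A] unfolding abs_summable_on_def by simp
  thus False using assms summable_on_iff_abs_summable_on_real by blast
qed

section \<open>Exponential decay of the semigroup of a coercive operator\<close>

lemma norm_exp_minus_one_minus_le:
  fixes Y :: "'b::{real_normed_algebra_1,banach}"
  assumes "norm Y \<le> 1"
  shows "norm (exp Y - 1 - Y) \<le> (norm Y)\<^sup>2"
proof -
  have sY: "summable (\<lambda>n. norm (inverse (fact (n + 2)) *\<^sub>R (Y ^ (n + 2))))"
    using summable_ignore_initial_segment[OF summable_norm_exp[of Y], of 2] by simp
  have sy: "summable (\<lambda>n. inverse (fact (n + 2)) * (norm Y) ^ (n + 2))"
    using summable_ignore_initial_segment[OF summable_exp_generic[of "norm Y"], of 2]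
    by (simp add: mult.commute)
  have "norm (exp Y - 1 - Y) = norm (\<Sum>n. inverse (fact (n + 2)) *\<^sub>R (Y ^ (n + 2)))"
    using exp_first_two_terms[of Y] by simp
  also have "\<dots> \<le> (\<Sum>n. norm (inverse (fact (n + 2)) *\<^sub>R (Y ^ (n + 2))))"
    by (rule summable_norm[OF sY])
  also have "\<dots> \<le> (\<Sum>n. inverse (fact (n + 2)) * (norm Y) ^ (n + 2))"
  proof (rule suminf_le[OF _ sY sy])
    show "norm (inverse (fact (n + 2)) *\<^sub>R (Y ^ (n + 2))) \<le> inverse (fact (n + 2)) * (norm Y) ^ (n + 2)"
      for n using norm_power_ineq[of Y "n + 2"] by (simp add: mult_left_mono)
  qed
  also have "\<dots> = exp (norm Y) - 1 - norm Y"
    using exp_first_two_terms[of "norm Y"] by simp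
  also have "\<dots> \<le> (norm Y)\<^sup>2" using exp_bound[of "norm Y"] assms by simp
  finally show ?thesis .
qed

lemma exp_scaleR_of_nat:
  fixes Y :: "'b::{real_normed_algebra_1,banach}"
  shows "exp (real n *\<^sub>R Y) = exp Y ^ n"
proof (induction n)
  case (Suc n)
  have "real (Suc n) *\<^sub>R Y = Y + real n *\<^sub>R Y" by (simp add: algebra_simps)
  thus ?case using Suc by (simp add: exp_add_commuting)
qed simp

lemma norm_one_minus_scaleR_le:
  fixes A :: "'a ell2_op"
  assumes coercive: "\<And>v. c * (norm v)\<^sup>2 \<le> inner (op_apply A v) v"
    and s: "0 \<le> s" "s * c \<le> 2" "s * (norm A)\<^sup>2 \<le> c / 4"
  shows "norm (1 - s *\<^sub>R A) \<le> 1 - s * c / 2"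
proof -
  have "norm (v - s *\<^sub>R op_apply A v) \<le> (1 - s * c / 2) * norm v" for v
  proof -
    have "(norm (v - s *\<^sub>R op_apply A v))\<^sup>2
        = (norm v)\<^sup>2 - 2 * s * inner (op_apply A v) v + s\<^sup>2 * (norm (op_apply A v))\<^sup>2"
      unfolding power2_norm_eq_inner
      by (simp add: inner_diff_left inner_diff_right inner_commute algebra_simps power2_eq_square)
    also have "\<dots> \<le> (norm v)\<^sup>2 - 2 * s * (c * (norm v)\<^sup>2) + s\<^sup>2 * (norm A * norm v)\<^sup>2"
      using coercive[of v] s norm_op_apply_le[of A v]
      by (intro add_mono diff_mono mult_left_mono power_mono) auto
    also have "\<dots> = (1 - 2 * s * c + s * (s * (norm A)\<^sup>2)) * (norm v)\<^sup>2"
      by (simp add: algebra_simps power2_eq_square)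
    also have "\<dots> \<le> (1 - s * c / 2)\<^sup>2 * (norm v)\<^sup>2"
    proof (rule mult_right_mono)
      have h1: "s * (s * (norm A)\<^sup>2) \<le> (s * c) / 4"
        using mult_left_mono[OF s(3) s(1)] by simp
      have h2: "0 \<le> s * (s * (norm A)\<^sup>2)" using s(1) by simp
      have h3: "(1 - s * c / 2)\<^sup>2 = 1 - s * c + (s * c)\<^sup>2 / 4"
        by (simp add: power2_eq_square algebra_simps)
      have h4: "2 * s * c = 2 * (s * c)" by simp
      have h5: "0 \<le> (s * c)\<^sup>2 / 4" by simp
      show "1 - 2 * s * c + s * (s * (norm A)\<^sup>2) \<le> (1 - s * c / 2)\<^sup>2"
        unfolding h3 h4 using h1 h2 h5 by linarith
    qed simp
    finally have "(norm (v - s *\<^sub>R op_apply A v))\<^sup>2 \<le> ((1 - s * c / 2) * norm v)\<^sup>2"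
      by (simp add: power_mult_distrib)
    thus ?thesis using s(2) by (simp add: power2_le_iff_abs_le)
  qed
  thus ?thesis
    unfolding norm_ell2_op_def using s(2)
    by (intro norm_blinfun_bound) (auto simp: op_apply_simps)
qed

lemma small_step_exists:
  fixes a c :: real
  assumes a: "0 \<le> a" and c: "0 < c"
  obtains s where "0 < s" "s * a \<le> 1" "s * c \<le> 1" "s * a\<^sup>2 \<le> c / 4"
proof -
  define s where "s = min (1 / (a + 1)) (min (1 / (c + 1)) (c / (4 * (a\<^sup>2 + 1))))"
  have d0: "0 < 4 * (a\<^sup>2 + 1)" by (simp add: add_nonneg_pos)
  hence s0: "0 < s" using a c by (simp add: s_def del: distrib_left)
  have "s * a \<le> (1 / (a + 1)) * a" using a by (intro mult_right_mono) (auto simp: s_def)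
  also have "\<dots> \<le> 1" using a by (simp add: field_simps)
  finally have sa: "s * a \<le> 1" .
  have "s * c \<le> (1 / (c + 1)) * c" using c by (intro mult_right_mono) (auto simp: s_def)
  also have "\<dots> \<le> 1" using c by (simp add: field_simps)
  finally have sc: "s * c \<le> 1" .
  have "s \<le> c / (4 * (a\<^sup>2 + 1))" by (simp add: s_def)
  hence "s * (4 * (a\<^sup>2 + 1)) \<le> c" using pos_le_divide_eq[OF d0] by blast
  moreover have "s * a\<^sup>2 \<le> s * (a\<^sup>2 + 1)" using s0 by simp
  moreover have "s * (4 * (a\<^sup>2 + 1)) = 4 * (s * (a\<^sup>2 + 1))" by simp
  ultimately have "s * a\<^sup>2 \<le> c / 4" by linarith
  thus ?thesis using that s0 sa sc by blast
qed

lemma exp_contraction_if_coercive: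
  fixes A :: "'a ell2_op"
  assumes c: "0 < c" and coercive: "\<And>v. c * (norm v)\<^sup>2 \<le> inner (op_apply A v) v"
  obtains s where "s > 0" "s * c \<le> 1" "norm (exp ((-s) *\<^sub>R A)) \<le> 1 - s * c / 4"
proof -
  define a where "a = norm A"
  have "0 \<le> a" by (simp add: a_def)
  then obtain s where s0: "0 < s" and sa: "s * a \<le> 1" and sc: "s * c \<le> 1" and sa2: "s * a\<^sup>2 \<le> c / 4"
    by (rule small_step_exists[OF _ c])
  have "norm (exp ((-s) *\<^sub>R A))
      = norm ((1 - s *\<^sub>R A) + (exp ((-s) *\<^sub>R A) - 1 - (-s) *\<^sub>R A))"
    by (simp add: algebra_simps)
  also have "\<dots> \<le> norm (1 - s *\<^sub>R A) + norm (exp ((-s) *\<^sub>R A) - 1 - (-s) *\<^sub>R A)"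
    by (rule norm_triangle_ineq)
  also have "\<dots> \<le> (1 - s * c / 2) + (s * a)\<^sup>2"
  proof (rule add_mono)
    show "norm (1 - s *\<^sub>R A) \<le> 1 - s * c / 2"
      by (rule norm_one_minus_scaleR_le[OF coercive]) (use s0 sc sa2[unfolded a_def] in auto)
    have "norm ((-s) *\<^sub>R A) = s * a" using s0 by (simp add: a_def)
    thus "norm (exp ((-s) *\<^sub>R A) - 1 - (-s) *\<^sub>R A) \<le> (s * a)\<^sup>2"
      using norm_exp_minus_one_minus_le[of "(-s) *\<^sub>R A"] sa by simp
  qed
  also have "\<dots> \<le> 1 - s * c / 4"
  proof -
    have "(s * a)\<^sup>2 = s * (s * a\<^sup>2)" by (simp add: power2_eq_square)
    also have "\<dots> \<le> s * (c / 4)" using sa2 s0 by (intro mult_left_mono) auto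
    finally show ?thesis by simp
  qed
  finally show ?thesis using that s0 sc by blast
qed

lemma exp_decay_if_coercive:
  fixes A :: "'a ell2_op"
  assumes "0 < c" "\<And>v. c * (norm v)\<^sup>2 \<le> inner (op_apply A v) v" "0 < \<alpha>"
  obtains T where "T > 0" "norm (exp ((-T) *\<^sub>R A)) \<le> \<alpha>"
proof -
  obtain s where s: "s > 0" "s * c \<le> 1" "norm (exp ((-s) *\<^sub>R A)) \<le> 1 - s * c / 4"
    by (rule exp_contraction_if_coercive[OF assms(1,2)])
  define q where "q = 1 - s * c / 4"
  have q: "0 \<le> q" "q < 1" using s assms(1) by (auto simp: q_def)
  have "eventually (\<lambda>n. q ^ n < \<alpha>) sequentially"
    using LIMSEQ_power_zero[of q] q assms(3) by (intro order_tendstoD(2)) auto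
  then obtain N where "\<forall>n\<ge>N. q ^ n < \<alpha>"
    by (auto simp: eventually_sequentially)
  hence n: "q ^ Suc N < \<alpha>" by (simp del: power_Suc)
  have "exp ((- (real (Suc N) * s)) *\<^sub>R A) = exp ((-s) *\<^sub>R A) ^ Suc N"
    using exp_scaleR_of_nat[of "Suc N" "(-s) *\<^sub>R A"] by simp
  hence "norm (exp ((- (real (Suc N) * s)) *\<^sub>R A)) \<le> q ^ Suc N"
    using norm_power_ineq[of "exp ((-s) *\<^sub>R A)" "Suc N"] power_mono[OF s(3)[folded q_def], of "Suc N"]
    by (simp del: power_Suc)
  thus ?thesis using that[of "real (Suc N) * s"] s(1) n by simp
qed

section \<open>Weighted graphs with bounded degree and bounded measure\<close>

locale bounded_weighted_graph =
  fixes X :: "'a set" and b :: "'a \<Rightarrow> 'a \<Rightarrow> real" and m :: "'a \<Rightarrow> real"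
  assumes weighted_graph: "weighted_graph X b m"
    and bounded_degree: "bounded_degree X b m"
    and bounded_measure: "bounded_measure X m"
begin

lemma m_pos: "x \<in> X \<Longrightarrow> 0 < m x"
  using weighted_graph by (simp add: weighted_graph_def)

lemma b_nonneg: "x \<in> X \<Longrightarrow> y \<in> X \<Longrightarrow> 0 \<le> b x y"
  using weighted_graph by (simp add: weighted_graph_def)

lemma b_sym: "x \<in> X \<Longrightarrow> y \<in> X \<Longrightarrow> b x y = b y x"
  using weighted_graph by (simp add: weighted_graph_def)

lemma summable_on_b: "x \<in> X \<Longrightarrow> b x summable_on X"
  using weighted_graph by (simp add: weighted_graph_def)

lemma summable_on_b_left: "y \<in> X \<Longrightarrow> (\<lambda>x. b x y) summable_on X"
  by (subst summable_on_cong[where g = "b y"]) (simp_all add: b_sym summable_on_b)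

text \<open>Both bounds are raised to at least \<open>1\<close> only to make them positive.\<close>

definition "Dmax = max 1 (SOME C. \<forall>x\<in>X. Deg X b m x \<le> C)"
definition "Mmax = max 1 (SOME C. \<forall>x\<in>X. m x \<le> C)"

lemma Dmax_pos: "0 < Dmax" by (simp add: Dmax_def)
lemma Mmax_pos: "0 < Mmax" by (simp add: Mmax_def)

lemma m_le_Mmax: "x \<in> X \<Longrightarrow> m x \<le> Mmax"
proof -
  have "\<exists>C. \<forall>x\<in>X. m x \<le> C" using bounded_measure by (simp add: bounded_measure_def)
  hence "\<forall>x\<in>X. m x \<le> (SOME C. \<forall>x\<in>X. m x \<le> C)" by (rule someI_ex)
  thus "x \<in> X \<Longrightarrow> m x \<le> Mmax" unfolding Mmax_def by force
qed

lemma infsum_b_le: "x \<in> X \<Longrightarrow> (\<Sum>\<^sub>\<infinity>y\<in>X. b x y) \<le> Dmax * m x"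
proof -
  assume x: "x \<in> X"
  have "\<exists>C. \<forall>x\<in>X. Deg X b m x \<le> C" using bounded_degree by (simp add: bounded_degree_def)
  hence "\<forall>x\<in>X. Deg X b m x \<le> (SOME C. \<forall>x\<in>X. Deg X b m x \<le> C)" by (rule someI_ex)
  hence "Deg X b m x \<le> Dmax" unfolding Dmax_def using x by force
  thus ?thesis using m_pos[OF x] by (simp add: Deg_def divide_le_eq mult.commute)
qed

lemma b_le:
  assumes "x \<in> X" "y \<in> X"
  shows "b x y \<le> Dmax * m x"
proof -
  have "(\<Sum>z\<in>{y}. b x z) \<le> (\<Sum>\<^sub>\<infinity>z\<in>X. b x z)"
    by (rule finite_sum_le_infsum) (use assms summable_on_b b_nonneg in auto)
  thus ?thesis using infsum_b_le[OF assms(1)] by simp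
qed

definition l2_summable :: "('a \<Rightarrow> complex) \<Rightarrow> bool" where
  "l2_summable f \<longleftrightarrow> (\<lambda>x. m x * (cmod (f x))\<^sup>2) summable_on X"

abbreviation l2_mass :: "'a set \<Rightarrow> ('a \<Rightarrow> complex) \<Rightarrow> real" where
  "l2_mass S f \<equiv> \<Sum>\<^sub>\<infinity>x\<in>S. m x * (cmod (f x))\<^sup>2"

lemma m_cmod_sq_nonneg: "x \<in> X \<Longrightarrow> 0 \<le> m x * (cmod (f x))\<^sup>2"
  using m_pos by (simp add: less_imp_le)

lemma l2_mass_nonneg: "S \<subseteq> X \<Longrightarrow> 0 \<le> l2_mass S f"
  by (rule infsum_nonneg) (auto intro: m_cmod_sq_nonneg)

lemma l2_summable_subset:
  "l2_summable f \<Longrightarrow> S \<subseteq> X \<Longrightarrow> (\<lambda>x. m x * (cmod (f x))\<^sup>2) summable_on S"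
  unfolding l2_summable_def by (rule summable_on_subset_banach)

lemma l2_summable_restrict: "l2_summable f \<Longrightarrow> l2_summable (\<lambda>z. if z \<in> S then f z else 0)"
  unfolding l2_summable_def
  by (rule summable_on_comparison_test) (auto intro: m_cmod_sq_nonneg)

lemma l2_summable_add:
  assumes "l2_summable f" "l2_summable g"
  shows "l2_summable (\<lambda>x. f x + g x)"
  unfolding l2_summable_def
proof (rule summable_on_comparison_test)
  show "(\<lambda>x. 2 * (m x * (cmod (f x))\<^sup>2) + 2 * (m x * (cmod (g x))\<^sup>2)) summable_on X"
    using assms unfolding l2_summable_def by (intro summable_on_add summable_on_cmult_right)
  show "m x * (cmod (f x + g x))\<^sup>2 \<le> 2 * (m x * (cmod (f x))\<^sup>2) + 2 * (m x * (cmod (g x))\<^sup>2)"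
    if "x \<in> X" for x
    using mult_left_mono[OF power2_norm_add_le[of "f x" "g x"] less_imp_le[OF m_pos[OF that]]]
    by (simp add: algebra_simps)
qed (rule m_cmod_sq_nonneg)

lemma l2_summable_mult: "l2_summable f \<Longrightarrow> l2_summable (\<lambda>x. c * f x)"
  unfolding l2_summable_def
  using summable_on_cmult_right[of "\<lambda>x. m x * (cmod (f x))\<^sup>2" X "(cmod c)\<^sup>2"]
  by (simp add: norm_mult power_mult_distrib mult_ac)

lemma l2norm_eq_sqrt_infsum:
  assumes "A \<subseteq> X" "(\<lambda>x. m x * (cmod (f x))\<^sup>2) summable_on A"
  shows "l2norm m A f = ennreal (sqrt (l2_mass A f))"
proof -
  have "(\<integral>\<^sup>+x. ennreal (m x * (cmod (f x))\<^sup>2) \<partial>count_space A)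
      = ennreal (l2_mass A f)"
    by (rule nn_integral_count_space_infsum) (use assms m_cmod_sq_nonneg in auto)
  moreover have "0 \<le> l2_mass A f"
    by (rule l2_mass_nonneg[OF assms(1)])
  ultimately show ?thesis unfolding l2norm_def by (simp add: enn_powr_def powr_half_sqrt)
qed

lemma in_l2_iff_l2_summable: "in_l2 m X f \<longleftrightarrow> l2_summable f"
proof
  assume "in_l2 m X f"
  show "l2_summable f"
  proof (rule ccontr)
    assume "\<not> l2_summable f"
    hence "(\<integral>\<^sup>+x. ennreal (m x * (cmod (f x))\<^sup>2) \<partial>count_space X) = \<infinity>"
      unfolding l2_summable_def
      by (intro nn_integral_count_space_not_summable) (use m_cmod_sq_nonneg in auto)
    hence "l2norm m X f = \<infinity>" by (simp add: l2norm_def enn_powr_def)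
    thus False using \<open>in_l2 m X f\<close> by (simp add: in_l2_def)
  qed
qed (simp add: in_l2_def l2norm_eq_sqrt_infsum l2_summable_def)

definition to_ell2 :: "('a \<Rightarrow> complex) \<Rightarrow> 'a ell2" where
  "to_ell2 f = Abs_ell2 (\<lambda>x. if x \<in> X then complex_of_real (sqrt (m x)) * f x else 0)"

definition of_ell2 :: "'a ell2 \<Rightarrow> 'a \<Rightarrow> complex" where
  "of_ell2 v x = ell2_apply v x / complex_of_real (sqrt (m x))"

lemma cmod_sqrt_m_mult_sq: "x \<in> X \<Longrightarrow> (cmod (complex_of_real (sqrt (m x)) * z))\<^sup>2 = m x * (cmod z)\<^sup>2"
  using m_pos[of x] by (simp add: norm_mult power_mult_distrib)

lemma ell2_apply_to_ell2:
  assumes "l2_summable f"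
  shows "ell2_apply (to_ell2 f) = (\<lambda>x. if x \<in> X then complex_of_real (sqrt (m x)) * f x else 0)"
proof -
  have "(\<lambda>x. (cmod (if x \<in> X then complex_of_real (sqrt (m x)) * f x else 0))\<^sup>2) summable_on UNIV
        \<longleftrightarrow> (\<lambda>x. m x * (cmod (f x))\<^sup>2) summable_on X"
    by (rule summable_on_cong_neutral) (auto simp: cmod_sqrt_m_mult_sq)
  thus ?thesis using assms unfolding to_ell2_def l2_summable_def by (simp add: Abs_ell2_inverse)
qed

lemma power2_norm_to_ell2:
  assumes "l2_summable f"
  shows "(norm (to_ell2 f))\<^sup>2 = l2_mass X f"
  unfolding power2_norm_ell2 ell2_apply_to_ell2[OF assms]
  by (rule infsum_cong_neutral) (auto simp: cmod_sqrt_m_mult_sq)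

lemma l2norm_eq_norm_to_ell2:
  assumes "l2_summable f"
  shows "l2norm m X f = ennreal (norm (to_ell2 f))"
proof -
  have "sqrt ((norm (to_ell2 f))\<^sup>2) = norm (to_ell2 f)" by simp
  thus ?thesis
    using l2norm_eq_sqrt_infsum[of X f] assms unfolding power2_norm_to_ell2[OF assms]
    by (simp add: l2_summable_def)
qed

lemma m_cmod_of_ell2_sq: "x \<in> X \<Longrightarrow> m x * (cmod (of_ell2 v x))\<^sup>2 = (cmod (ell2_apply v x))\<^sup>2"
  using m_pos[of x] by (simp add: of_ell2_def norm_divide power_divide)

lemma l2_summable_of_ell2: "l2_summable (of_ell2 v)"
  unfolding l2_summable_def
  by (subst summable_on_cong[where g = "\<lambda>x. (cmod (ell2_apply v x))\<^sup>2"])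
    (simp_all add: m_cmod_of_ell2_sq summable_on_ell2_sq)

lemma l2_mass_of_ell2_le: "l2_mass X (of_ell2 v) \<le> (norm v)\<^sup>2"
proof -
  have "l2_mass X (of_ell2 v) = (\<Sum>\<^sub>\<infinity>x\<in>X. (cmod (ell2_apply v x))\<^sup>2)"
    by (rule infsum_cong) (simp add: m_cmod_of_ell2_sq)
  also have "\<dots> \<le> (\<Sum>\<^sub>\<infinity>x. (cmod (ell2_apply v x))\<^sup>2)"
    by (rule infsum_mono_neutral) (auto simp: summable_on_ell2_sq)
  finally show ?thesis by (simp add: power2_norm_ell2)
qed

lemma of_ell2_to_ell2: "l2_summable f \<Longrightarrow> x \<in> X \<Longrightarrow> of_ell2 (to_ell2 f) x = f x"
  using m_pos[of x] by (simp add: of_ell2_def ell2_apply_to_ell2)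


lemma to_ell2_cong: "(\<And>x. x \<in> X \<Longrightarrow> f x = g x) \<Longrightarrow> to_ell2 f = to_ell2 g"
  unfolding to_ell2_def by (rule arg_cong[where f = Abs_ell2]) auto

lemma to_ell2_add:
  "l2_summable f \<Longrightarrow> l2_summable g \<Longrightarrow> to_ell2 (\<lambda>x. f x + g x) = to_ell2 f + to_ell2 g"
  using l2_summable_add[of f g] by (intro ell2_eqI) (simp add: ell2_apply_to_ell2 distrib_left)

lemma to_ell2_mult:
  "l2_summable f \<Longrightarrow> to_ell2 (\<lambda>x. complex_of_real r * f x) = r *\<^sub>R to_ell2 f"
  using l2_summable_mult[of f "complex_of_real r"]
  by (intro ell2_eqI) (simp add: ell2_apply_to_ell2 mult.left_commute)

lemma of_ell2_add: "of_ell2 (v + w) = (\<lambda>x. of_ell2 v x + of_ell2 w x)"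
  by (simp add: of_ell2_def fun_eq_iff add_divide_distrib)

lemma of_ell2_scaleR: "of_ell2 (r *\<^sub>R v) = (\<lambda>x. complex_of_real r * of_ell2 v x)"
  by (simp add: of_ell2_def fun_eq_iff)

lemma summable_on_b_cmod_sq:
  assumes "x \<in> X" "l2_summable f"
  shows "(\<lambda>y. b x y * (cmod (f y))\<^sup>2) summable_on X"
proof (rule summable_on_comparison_test)
  show "(\<lambda>y. Dmax * (m y * (cmod (f y))\<^sup>2)) summable_on X"
    using assms(2) unfolding l2_summable_def by (rule summable_on_cmult_right)
  show "b x y * (cmod (f y))\<^sup>2 \<le> Dmax * (m y * (cmod (f y))\<^sup>2)" if "y \<in> X" for y
    using b_le[OF that assms(1)] b_sym[OF assms(1) that]
    by (simp add: mult_right_mono mult.assoc[symmetric])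
  show "0 \<le> b x y * (cmod (f y))\<^sup>2" if "y \<in> X" for y using b_nonneg assms(1) that by simp
qed

lemma summable_on_b_cmod:
  assumes "x \<in> X" "l2_summable f"
  shows "(\<lambda>y. b x y * cmod (f y)) summable_on X"
  using weighted_cauchy_schwarz_infsum(1)[of X "b x" "\<lambda>y. cmod (f y)"]
    b_nonneg[OF assms(1)] summable_on_b[OF assms(1)] summable_on_b_cmod_sq[OF assms]
  by simp

lemma norm_Lap_term_le:
  assumes "x \<in> X" "y \<in> X"
  shows "norm (complex_of_real (b x y) * (f x - f y)) \<le> cmod (f x) * b x y + b x y * cmod (f y)"
proof -
  have "norm (complex_of_real (b x y) * (f x - f y)) = b x y * cmod (f x - f y)"
    using b_nonneg[OF assms] by (simp add: norm_mult)
  also have "\<dots> \<le> b x y * (cmod (f x) + cmod (f y))"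
    using b_nonneg[OF assms] by (intro mult_left_mono norm_triangle_ineq4)
  finally show ?thesis by (simp add: algebra_simps)
qed

lemma summable_on_Lap_terms:
  assumes "x \<in> X" "l2_summable f"
  shows "(\<lambda>y. complex_of_real (b x y) * (f x - f y)) summable_on X"
proof -
  have "(\<lambda>y. norm (complex_of_real (b x y) * (f x - f y))) summable_on X"
  proof (rule summable_on_comparison_test)
    show "(\<lambda>y. cmod (f x) * b x y + b x y * cmod (f y)) summable_on X"
      by (intro summable_on_add summable_on_cmult_right summable_on_b summable_on_b_cmod assms)
    show "norm (complex_of_real (b x y) * (f x - f y)) \<le> cmod (f x) * b x y + b x y * cmod (f y)"
      if "y \<in> X" for y
      using assms(1) that by (rule norm_Lap_term_le)
  qed simp
  thus ?thesis by (rule abs_summable_summable)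
qed

lemma Lap_cong: "x \<in> X \<Longrightarrow> (\<And>y. y \<in> X \<Longrightarrow> f y = g y) \<Longrightarrow> Lap X b m f x = Lap X b m g x"
  unfolding Lap_def by (auto intro!: infsum_cong)

lemma Lap_add:
  assumes "x \<in> X" "l2_summable f" "l2_summable g"
  shows "Lap X b m (\<lambda>y. f y + g y) x = Lap X b m f x + Lap X b m g x"
proof -
  have "(\<Sum>\<^sub>\<infinity>y\<in>X. complex_of_real (b x y) * (f x + g x - (f y + g y))) =
        (\<Sum>\<^sub>\<infinity>y\<in>X. complex_of_real (b x y) * (f x - f y) + complex_of_real (b x y) * (g x - g y))"
    by (rule infsum_cong) (simp add: algebra_simps)
  also have "\<dots> = (\<Sum>\<^sub>\<infinity>y\<in>X. complex_of_real (b x y) * (f x - f y))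
      + (\<Sum>\<^sub>\<infinity>y\<in>X. complex_of_real (b x y) * (g x - g y))"
    by (rule infsum_add) (intro summable_on_Lap_terms assms)+
  finally show ?thesis unfolding Lap_def by (simp add: algebra_simps)
qed

lemma Lap_mult:
  assumes "x \<in> X" "l2_summable f"
  shows "Lap X b m (\<lambda>y. c * f y) x = c * Lap X b m f x"
proof -
  have "(\<Sum>\<^sub>\<infinity>y\<in>X. complex_of_real (b x y) * (c * f x - c * f y)) =
        (\<Sum>\<^sub>\<infinity>y\<in>X. c * (complex_of_real (b x y) * (f x - f y)))"
    by (rule infsum_cong) (simp add: algebra_simps)
  also have "\<dots> = c * (\<Sum>\<^sub>\<infinity>y\<in>X. complex_of_real (b x y) * (f x - f y))"
    by (rule infsum_cmult_right) (intro summable_on_Lap_terms assms)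
  finally show ?thesis unfolding Lap_def by (simp add: algebra_simps)
qed

lemma summable_on_degree_cmod_sq:
  assumes "l2_summable f"
  shows "(\<lambda>x. (\<Sum>\<^sub>\<infinity>y\<in>X. b x y) * (cmod (f x))\<^sup>2) summable_on X"
proof (rule summable_on_comparison_test)
  show "(\<lambda>x. Dmax * (m x * (cmod (f x))\<^sup>2)) summable_on X"
    using assms unfolding l2_summable_def by (rule summable_on_cmult_right)
  show "(\<Sum>\<^sub>\<infinity>y\<in>X. b x y) * (cmod (f x))\<^sup>2 \<le> Dmax * (m x * (cmod (f x))\<^sup>2)" if "x \<in> X" for x
    using infsum_b_le[OF that] by (simp add: mult_right_mono mult.assoc[symmetric])
  show "0 \<le> (\<Sum>\<^sub>\<infinity>y\<in>X. b x y) * (cmod (f x))\<^sup>2" if "x \<in> X" for x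
    using b_nonneg that by (auto intro!: mult_nonneg_nonneg infsum_nonneg)
qed

lemma infsum_degree_cmod_sq_le:
  assumes "l2_summable f"
  shows "(\<Sum>\<^sub>\<infinity>x\<in>X. (\<Sum>\<^sub>\<infinity>y\<in>X. b x y) * (cmod (f x))\<^sup>2)
    \<le> Dmax * l2_mass X f"
proof -
  have "(\<Sum>\<^sub>\<infinity>x\<in>X. (\<Sum>\<^sub>\<infinity>y\<in>X. b x y) * (cmod (f x))\<^sup>2) \<le> (\<Sum>\<^sub>\<infinity>x\<in>X. Dmax * (m x * (cmod (f x))\<^sup>2))"
    using assms infsum_b_le unfolding l2_summable_def
    by (intro infsum_mono summable_on_degree_cmod_sq summable_on_cmult_right assms)
      (simp_all add: mult_right_mono mult.assoc[symmetric])
  also have "\<dots> = Dmax * l2_mass X f"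
    using assms unfolding l2_summable_def by (rule infsum_cmult_right)
  finally show ?thesis .
qed

lemma infsum_b_left_cmod_sq:
  assumes "y \<in> X"
  shows "(\<Sum>\<^sub>\<infinity>x\<in>X. b x y * (cmod (f y))\<^sup>2) = (\<Sum>\<^sub>\<infinity>x\<in>X. b y x) * (cmod (f y))\<^sup>2"
proof -
  have "(\<Sum>\<^sub>\<infinity>x\<in>X. b x y * (cmod (f y))\<^sup>2) = (\<Sum>\<^sub>\<infinity>x\<in>X. b x y) * (cmod (f y))\<^sup>2"
    using summable_on_b_left[OF assms] by (rule infsum_cmult_left)
  also have "(\<Sum>\<^sub>\<infinity>x\<in>X. b x y) = (\<Sum>\<^sub>\<infinity>x\<in>X. b y x)"
    by (rule infsum_cong) (simp add: b_sym assms)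
  finally show ?thesis .
qed

lemma
  assumes "l2_summable f"
  shows summable_on_infsum_b_cmod_sq: "(\<lambda>x. \<Sum>\<^sub>\<infinity>y\<in>X. b x y * (cmod (f y))\<^sup>2) summable_on X"
    and infsum_swap_b_cmod_sq: "(\<Sum>\<^sub>\<infinity>x\<in>X. \<Sum>\<^sub>\<infinity>y\<in>X. b x y * (cmod (f y))\<^sup>2)
      = (\<Sum>\<^sub>\<infinity>x\<in>X. (\<Sum>\<^sub>\<infinity>y\<in>X. b x y) * (cmod (f x))\<^sup>2)"
proof -
  have rows: "(\<lambda>x. b x y * (cmod (f y))\<^sup>2) summable_on X" if "y \<in> X" for y
    using summable_on_b_left[OF that] by (rule summable_on_cmult_left)
  have row_sums: "(\<lambda>y. \<Sum>\<^sub>\<infinity>x\<in>X. b x y * (cmod (f y))\<^sup>2) summable_on X"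
    using summable_on_degree_cmod_sq[OF assms] summable_on_cong[of X] infsum_b_left_cmod_sq
    by (metis (no_types, lifting))
  note swap = infsum_swap_nonneg[of X X "\<lambda>y x. b x y * (cmod (f y))\<^sup>2", OF _ rows row_sums]
  show "(\<lambda>x. \<Sum>\<^sub>\<infinity>y\<in>X. b x y * (cmod (f y))\<^sup>2) summable_on X"
    using swap(1) b_nonneg by simp
  have "(\<Sum>\<^sub>\<infinity>x\<in>X. \<Sum>\<^sub>\<infinity>y\<in>X. b x y * (cmod (f y))\<^sup>2) = (\<Sum>\<^sub>\<infinity>y\<in>X. \<Sum>\<^sub>\<infinity>x\<in>X. b x y * (cmod (f y))\<^sup>2)"
    using swap(2) b_nonneg by simp
  also have "\<dots> = (\<Sum>\<^sub>\<infinity>y\<in>X. (\<Sum>\<^sub>\<infinity>x\<in>X. b y x) * (cmod (f y))\<^sup>2)"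
    by (rule infsum_cong) (rule infsum_b_left_cmod_sq)
  finally show "(\<Sum>\<^sub>\<infinity>x\<in>X. \<Sum>\<^sub>\<infinity>y\<in>X. b x y * (cmod (f y))\<^sup>2)
      = (\<Sum>\<^sub>\<infinity>x\<in>X. (\<Sum>\<^sub>\<infinity>y\<in>X. b x y) * (cmod (f x))\<^sup>2)" .
qed

lemma cmod_infsum_Lap_terms_le:
  assumes x: "x \<in> X" and f: "l2_summable f"
  shows "cmod (\<Sum>\<^sub>\<infinity>y\<in>X. complex_of_real (b x y) * (f x - f y))
    \<le> cmod (f x) * (\<Sum>\<^sub>\<infinity>y\<in>X. b x y) + (\<Sum>\<^sub>\<infinity>y\<in>X. b x y * cmod (f y))"
proof -
  have "cmod (\<Sum>\<^sub>\<infinity>y\<in>X. complex_of_real (b x y) * (f x - f y))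
      \<le> (\<Sum>\<^sub>\<infinity>y\<in>X. cmod (f x) * b x y + b x y * cmod (f y))"
  proof (rule norm_infsum_le)
    show "((\<lambda>y. complex_of_real (b x y) * (f x - f y))
        has_sum (\<Sum>\<^sub>\<infinity>y\<in>X. complex_of_real (b x y) * (f x - f y))) X"
      using summable_on_Lap_terms[OF x f] by (rule has_sum_infsum)
    show "((\<lambda>y. cmod (f x) * b x y + b x y * cmod (f y))
        has_sum (\<Sum>\<^sub>\<infinity>y\<in>X. cmod (f x) * b x y + b x y * cmod (f y))) X"
      by (intro has_sum_infsum summable_on_add summable_on_cmult_right summable_on_b
          summable_on_b_cmod x f)
    show "norm (complex_of_real (b x y) * (f x - f y)) \<le> cmod (f x) * b x y + b x y * cmod (f y)"
      if "y \<in> X" for y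
      using x that by (rule norm_Lap_term_le)
  qed
  also have "\<dots> = cmod (f x) * (\<Sum>\<^sub>\<infinity>y\<in>X. b x y) + (\<Sum>\<^sub>\<infinity>y\<in>X. b x y * cmod (f y))"
    by (subst infsum_add)
      (auto intro!: summable_on_cmult_right summable_on_b summable_on_b_cmod x f
        simp: infsum_cmult_right summable_on_b x)
  finally show ?thesis .
qed

lemma m_cmod_Lap_sq_le:
  assumes x: "x \<in> X" and f: "l2_summable f"
  shows "m x * (cmod (Lap X b m f x))\<^sup>2
    \<le> 2 * Dmax\<^sup>2 * (m x * (cmod (f x))\<^sup>2) + 2 * Dmax * (\<Sum>\<^sub>\<infinity>y\<in>X. b x y * (cmod (f y))\<^sup>2)"
proof -
  define S where "S = (\<Sum>\<^sub>\<infinity>y\<in>X. b x y)"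
  define L where "L = (\<Sum>\<^sub>\<infinity>y\<in>X. b x y * cmod (f y))"
  define Q where "Q = (\<Sum>\<^sub>\<infinity>y\<in>X. b x y * (cmod (f y))\<^sup>2)"
  have mx: "0 < m x" using m_pos x by simp
  have S0: "0 \<le> S" and Q0: "0 \<le> Q"
    unfolding S_def Q_def by (auto intro!: infsum_nonneg simp: b_nonneg x)
  have SD: "S \<le> Dmax * m x" unfolding S_def by (rule infsum_b_le[OF x])
  have CS: "L\<^sup>2 \<le> S * Q"
    using weighted_cauchy_schwarz_infsum(2)[of X "b x" "\<lambda>y. cmod (f y)"]
      b_nonneg[OF x] summable_on_b[OF x] summable_on_b_cmod_sq[OF x f]
    by (simp add: S_def L_def Q_def)
  have "m x * (cmod (Lap X b m f x))\<^sup>2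
      = (cmod (\<Sum>\<^sub>\<infinity>y\<in>X. complex_of_real (b x y) * (f x - f y)))\<^sup>2 / m x"
    using mx by (simp add: Lap_def norm_mult norm_divide power_divide power2_eq_square)
  also have "\<dots> \<le> (cmod (f x) * S + L)\<^sup>2 / m x"
    using cmod_infsum_Lap_terms_le[OF x f] mx
    by (intro divide_right_mono power_mono) (auto simp: S_def L_def)
  also have "\<dots> \<le> (2 * (cmod (f x) * S)\<^sup>2 + 2 * L\<^sup>2) / m x"
    using mx by (intro divide_right_mono power2_add_le) auto
  also have "\<dots> \<le> (2 * (cmod (f x))\<^sup>2 * (Dmax * m x)\<^sup>2 + 2 * (Dmax * m x * Q)) / m x"
  proof (intro divide_right_mono add_mono)
    have "S\<^sup>2 \<le> (Dmax * m x)\<^sup>2" using SD S0 by (intro power_mono) auto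
    thus "2 * (cmod (f x) * S)\<^sup>2 \<le> 2 * (cmod (f x))\<^sup>2 * (Dmax * m x)\<^sup>2"
      by (simp add: power_mult_distrib mult_left_mono)
    show "2 * L\<^sup>2 \<le> 2 * (Dmax * m x * Q)"
      using CS mult_right_mono[OF SD Q0] by simp
  qed (use mx in auto)
  also have "\<dots> = 2 * Dmax\<^sup>2 * (m x * (cmod (f x))\<^sup>2) + 2 * Dmax * Q"
    using mx by (simp add: field_simps power2_eq_square)
  finally show ?thesis by (simp add: Q_def)
qed

lemma
  assumes f: "l2_summable f"
  shows l2_summable_Lap: "l2_summable (Lap X b m f)"
    and l2_mass_Lap_le: "l2_mass X (Lap X b m f)
      \<le> 4 * Dmax\<^sup>2 * l2_mass X f"
proof -
  define N where "N = l2_mass X f"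
  define B where "B x = 2 * Dmax\<^sup>2 * (m x * (cmod (f x))\<^sup>2)
    + 2 * Dmax * (\<Sum>\<^sub>\<infinity>y\<in>X. b x y * (cmod (f y))\<^sup>2)" for x
  have fs: "(\<lambda>x. m x * (cmod (f x))\<^sup>2) summable_on X" using f by (simp add: l2_summable_def)
  have B_summable: "B summable_on X"
    unfolding B_def using fs summable_on_infsum_b_cmod_sq[OF f]
    by (intro summable_on_add summable_on_cmult_right)
  show Lap: "l2_summable (Lap X b m f)"
    unfolding l2_summable_def
    by (rule summable_on_comparison_test[OF B_summable])
      (use m_cmod_Lap_sq_le[OF _ f] m_cmod_sq_nonneg in \<open>auto simp: B_def\<close>)
  have "l2_mass X (Lap X b m f) \<le> (\<Sum>\<^sub>\<infinity>x\<in>X. B x)"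
    by (rule infsum_mono[OF _ B_summable])
      (use Lap m_cmod_Lap_sq_le[OF _ f] in \<open>auto simp: l2_summable_def B_def\<close>)
  also have "\<dots> = 2 * Dmax\<^sup>2 * N + 2 * Dmax * (\<Sum>\<^sub>\<infinity>x\<in>X. \<Sum>\<^sub>\<infinity>y\<in>X. b x y * (cmod (f y))\<^sup>2)"
    unfolding N_def B_def using fs summable_on_infsum_b_cmod_sq[OF f]
    by (subst infsum_add) (auto intro!: summable_on_cmult_right simp: infsum_cmult_right)
  also have "\<dots> \<le> 2 * Dmax\<^sup>2 * N + 2 * Dmax * (Dmax * N)"
    using infsum_degree_cmod_sq_le[OF f] Dmax_pos
    by (intro add_left_mono mult_left_mono) (auto simp: infsum_swap_b_cmod_sq[OF f] N_def)
  also have "\<dots> = 4 * Dmax\<^sup>2 * N" by (simp add: power2_eq_square)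
  finally show "l2_mass X (Lap X b m f)
      \<le> 4 * Dmax\<^sup>2 * l2_mass X f"
    by (simp add: N_def)
qed

definition lap_ell2 :: "'a ell2 \<Rightarrow> 'a ell2" where
  "lap_ell2 v = to_ell2 (Lap X b m (of_ell2 v))"

lemma lap_ell2_add: "lap_ell2 (v + w) = lap_ell2 v + lap_ell2 w"
proof -
  have "lap_ell2 (v + w) = to_ell2 (\<lambda>x. Lap X b m (of_ell2 v) x + Lap X b m (of_ell2 w) x)"
    unfolding lap_ell2_def of_ell2_add
    by (rule to_ell2_cong) (simp add: Lap_add l2_summable_of_ell2)
  thus ?thesis
    unfolding lap_ell2_def by (simp add: to_ell2_add l2_summable_Lap l2_summable_of_ell2)
qed

lemma lap_ell2_scaleR: "lap_ell2 (r *\<^sub>R v) = r *\<^sub>R lap_ell2 v"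
proof -
  have "lap_ell2 (r *\<^sub>R v) = to_ell2 (\<lambda>x. complex_of_real r * Lap X b m (of_ell2 v) x)"
    unfolding lap_ell2_def of_ell2_scaleR
    by (rule to_ell2_cong) (simp add: Lap_mult l2_summable_of_ell2)
  thus ?thesis
    unfolding lap_ell2_def by (simp add: to_ell2_mult l2_summable_Lap l2_summable_of_ell2)
qed

lemma norm_lap_ell2_le: "norm (lap_ell2 v) \<le> 2 * Dmax * norm v"
proof -
  have "(norm (lap_ell2 v))\<^sup>2 = (\<Sum>\<^sub>\<infinity>x\<in>X. m x * (cmod (Lap X b m (of_ell2 v) x))\<^sup>2)"
    unfolding lap_ell2_def by (rule power2_norm_to_ell2[OF l2_summable_Lap[OF l2_summable_of_ell2]])
  also have "\<dots> \<le> 4 * Dmax\<^sup>2 * l2_mass X (of_ell2 v)"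
    by (rule l2_mass_Lap_le[OF l2_summable_of_ell2])
  also have "\<dots> \<le> 4 * Dmax\<^sup>2 * (norm v)\<^sup>2"
    using l2_mass_of_ell2_le by (intro mult_left_mono) auto
  also have "\<dots> = (2 * Dmax * norm v)\<^sup>2" by (simp add: power_mult_distrib)
  finally show ?thesis using Dmax_pos by (simp add: power2_le_iff_abs_le)
qed

lemma bounded_linear_lap_ell2: "bounded_linear lap_ell2"
  by (rule bounded_linear_intro[of _ "2 * Dmax"])
    (simp_all add: lap_ell2_add lap_ell2_scaleR norm_lap_ell2_le[simplified mult.commute])

definition H_op :: "'a ell2_op" where
  "H_op = op_of lap_ell2"

lemma op_apply_H_op: "op_apply H_op v = lap_ell2 v"
  by (simp add: H_op_def op_apply_op_of bounded_linear_lap_ell2)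

lemma op_apply_H_op_to_ell2: "l2_summable f \<Longrightarrow> op_apply H_op (to_ell2 f) = to_ell2 (Lap X b m f)"
  unfolding op_apply_H_op lap_ell2_def
  by (rule to_ell2_cong) (rule Lap_cong, auto simp: of_ell2_to_ell2)

lemma
  assumes "l2_summable f"
  shows l2_summable_Lap_power: "l2_summable ((Lap X b m ^^ n) f)"
    and to_ell2_Lap_power: "to_ell2 ((Lap X b m ^^ n) f) = op_apply (H_op ^ n) (to_ell2 f)"
proof (induction n)
  case (Suc n)
  { case 1 show ?case using l2_summable_Lap[OF Suc.IH(1)] by simp }
  { case 2 show ?case
      using op_apply_H_op_to_ell2[OF Suc.IH(1)] Suc.IH(2) by (simp add: op_apply_simps) }
qed (use assms in \<open>simp_all add: op_apply_simps\<close>)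

text \<open>As a bounded linear function of the operator, \<open>op_coord v x\<close> commutes with the
  exponential series.\<close>

definition op_coord :: "'a ell2 \<Rightarrow> 'a \<Rightarrow> 'a ell2_op \<Rightarrow> complex" where
  "op_coord v x Y = ell2_apply (op_apply Y v) x / complex_of_real (sqrt (m x))"

lemma bounded_linear_op_coord: "bounded_linear (op_coord v x)"
  unfolding op_coord_def
  by (rule bounded_linear_compose[OF bounded_linear_divide
        bounded_linear_compose[OF bounded_linear_ell2_apply bounded_linear_op_apply_left]])

lemma heat_sg_eq_exp:
  assumes f: "l2_summable f" and x: "x \<in> X"
  shows "heat_sg X b m t f x = op_coord (to_ell2 f) x (exp ((-t) *\<^sub>R H_op))"
proof -
  have "(\<lambda>n. op_coord (to_ell2 f) x (((-t) *\<^sub>R H_op) ^ n /\<^sub>R fact n))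
      sums op_coord (to_ell2 f) x (exp ((-t) *\<^sub>R H_op))"
    by (rule bounded_linear.sums[OF bounded_linear_op_coord exp_converges])
  moreover have "op_coord (to_ell2 f) x (((-t) *\<^sub>R H_op) ^ n /\<^sub>R fact n)
      = complex_of_real ((- t) ^ n / fact n) * (Lap X b m ^^ n) f x" for n
  proof -
    have "((-t) *\<^sub>R H_op) ^ n /\<^sub>R fact n = ((-t) ^ n / fact n) *\<^sub>R H_op ^ n"
      unfolding scaleR_power scaleR_scaleR by (simp add: field_simps)
    hence "op_coord (to_ell2 f) x (((-t) *\<^sub>R H_op) ^ n /\<^sub>R fact n)
        = complex_of_real ((-t) ^ n / fact n) * op_coord (to_ell2 f) x (H_op ^ n)"
      by (simp add: op_coord_def op_apply_simps)
    also have "op_coord (to_ell2 f) x (H_op ^ n) = (Lap X b m ^^ n) f x"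
      unfolding op_coord_def to_ell2_Lap_power[OF f, symmetric]
      using m_pos[OF x] x by (simp add: ell2_apply_to_ell2[OF l2_summable_Lap_power[OF f]])
    finally show ?thesis .
  qed
  ultimately show ?thesis unfolding heat_sg_def by (simp add: sums_iff)
qed

text \<open>\<open>energy f = \<Sum>\<^sub>x \<Sum>\<^sub>y b x y \<bar>f x - f y\<bar>\<^sup>2\<close> is twice the usual energy form, so that
  \<open>\<langle>H f, f\<rangle> = energy f / 2\<close>.\<close>

definition energy_density :: "('a \<Rightarrow> complex) \<Rightarrow> 'a \<Rightarrow> real" where
  "energy_density f x = (\<Sum>\<^sub>\<infinity>y\<in>X. b x y * (cmod (f x - f y))\<^sup>2)"

definition energy :: "('a \<Rightarrow> complex) \<Rightarrow> real" where
  "energy f = (\<Sum>\<^sub>\<infinity>x\<in>X. energy_density f x)"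

lemma b_cmod_diff_sq_le:
  assumes "x \<in> X" "y \<in> X"
  shows "b x y * (cmod (f x - f y))\<^sup>2 \<le> 2 * (b x y * (cmod (f x))\<^sup>2) + 2 * (b x y * (cmod (f y))\<^sup>2)"
  using mult_left_mono[OF power2_norm_add_le[of "f x" "- f y"] b_nonneg[OF assms]]
  by (simp add: algebra_simps)

lemma summable_on_energy_terms:
  assumes x: "x \<in> X" and f: "l2_summable f"
  shows "(\<lambda>y. b x y * (cmod (f x - f y))\<^sup>2) summable_on X"
proof (rule summable_on_comparison_test)
  show "(\<lambda>y. 2 * (b x y * (cmod (f x))\<^sup>2) + 2 * (b x y * (cmod (f y))\<^sup>2)) summable_on X"
    using summable_on_cmult_left[OF summable_on_b[OF x]] summable_on_b_cmod_sq[OF x f]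
    by (intro summable_on_add summable_on_cmult_right)
qed (use x b_cmod_diff_sq_le b_nonneg in auto)

lemma energy_density_nonneg: "x \<in> X \<Longrightarrow> 0 \<le> energy_density f x"
  unfolding energy_density_def by (rule infsum_nonneg) (simp add: b_nonneg)

lemma b_cmod_diff_sq_le_energy_density:
  assumes "x \<in> X" "y \<in> X" "l2_summable f"
  shows "b x y * (cmod (f x - f y))\<^sup>2 \<le> energy_density f x"
proof -
  have "(\<Sum>z\<in>{y}. b x z * (cmod (f x - f z))\<^sup>2) \<le> energy_density f x"
    unfolding energy_density_def
    by (rule finite_sum_le_infsum) (use summable_on_energy_terms b_nonneg assms in auto)
  thus ?thesis by simp
qed

lemma summable_on_energy_density:
  assumes f: "l2_summable f"
  shows "energy_density f summable_on X"
proof (rule summable_on_comparison_test)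
  show "(\<lambda>x. 2 * ((\<Sum>\<^sub>\<infinity>y\<in>X. b x y) * (cmod (f x))\<^sup>2) + 2 * (\<Sum>\<^sub>\<infinity>y\<in>X. b x y * (cmod (f y))\<^sup>2))
      summable_on X"
    by (intro summable_on_add summable_on_cmult_right summable_on_degree_cmod_sq
        summable_on_infsum_b_cmod_sq f)
  show "energy_density f x
      \<le> 2 * ((\<Sum>\<^sub>\<infinity>y\<in>X. b x y) * (cmod (f x))\<^sup>2) + 2 * (\<Sum>\<^sub>\<infinity>y\<in>X. b x y * (cmod (f y))\<^sup>2)"
    if x: "x \<in> X" for x
  proof -
    have row: "(\<lambda>y. b x y * (cmod (f x))\<^sup>2) summable_on X"
      using summable_on_b[OF x] by (rule summable_on_cmult_left)
    have "energy_density f x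
        \<le> (\<Sum>\<^sub>\<infinity>y\<in>X. 2 * (b x y * (cmod (f x))\<^sup>2) + 2 * (b x y * (cmod (f y))\<^sup>2))"
      unfolding energy_density_def
      using row summable_on_b_cmod_sq[OF x f] b_cmod_diff_sq_le[OF x]
      by (intro infsum_mono summable_on_energy_terms x f summable_on_add summable_on_cmult_right)
    also have "\<dots> = 2 * ((\<Sum>\<^sub>\<infinity>y\<in>X. b x y) * (cmod (f x))\<^sup>2) + 2 * (\<Sum>\<^sub>\<infinity>y\<in>X. b x y * (cmod (f y))\<^sup>2)"
      using row summable_on_b_cmod_sq[OF x f] infsum_cmult_left[OF summable_on_b[OF x]]
      by (simp add: infsum_add summable_on_cmult_right infsum_cmult_right)
    finally show ?thesis .
  qed
qed (use energy_density_nonneg in auto)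

lemma energy_nonneg: "0 \<le> energy f"
  unfolding energy_def by (rule infsum_nonneg) (rule energy_density_nonneg)

lemma infsum_lincomb3:
  fixes u v w :: "'b \<Rightarrow> real"
  assumes "u summable_on A" "v summable_on A" "w summable_on A"
  shows "(\<Sum>\<^sub>\<infinity>y\<in>A. c1 * u y + c2 * v y - c3 * w y)
    = c1 * infsum u A + c2 * infsum v A - c3 * infsum w A"
proof -
  have sums: "(\<lambda>y. c1 * u y) summable_on A" "(\<lambda>y. c2 * v y) summable_on A"
    "(\<lambda>y. - (c3 * w y)) summable_on A"
    using assms by (auto intro: summable_on_cmult_right simp: summable_on_uminus)
  have "(\<Sum>\<^sub>\<infinity>y\<in>A. c1 * u y + c2 * v y - c3 * w y)
      = (\<Sum>\<^sub>\<infinity>y\<in>A. c1 * u y + c2 * v y) + (\<Sum>\<^sub>\<infinity>y\<in>A. - (c3 * w y))"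
    using infsum_add[OF summable_on_add[OF sums(1,2)] sums(3)] by simp
  also have "(\<Sum>\<^sub>\<infinity>y\<in>A. c1 * u y + c2 * v y) = (\<Sum>\<^sub>\<infinity>y\<in>A. c1 * u y) + (\<Sum>\<^sub>\<infinity>y\<in>A. c2 * v y)"
    by (rule infsum_add[OF sums(1,2)])
  finally show ?thesis
    using assms by (simp add: infsum_uminus infsum_cmult_right)
qed

lemma Re_cnj_mult_diff:
  "Re (cnj a * (a - c)) = (1/2) * (cmod (a - c))\<^sup>2 + (1/2) * (cmod a)\<^sup>2 - (1/2) * (cmod c)\<^sup>2"
  unfolding cmod_power2 by (simp add: power2_eq_square algebra_simps)

lemma Re_cnj_mult_Lap_sum:
  assumes x: "x \<in> X" and f: "l2_summable f"
  shows "Re (cnj (f x) * (\<Sum>\<^sub>\<infinity>y\<in>X. complex_of_real (b x y) * (f x - f y)))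
    = (1/2) * energy_density f x + (1/2) * ((\<Sum>\<^sub>\<infinity>y\<in>X. b x y) * (cmod (f x))\<^sup>2)
      - (1/2) * (\<Sum>\<^sub>\<infinity>y\<in>X. b x y * (cmod (f y))\<^sup>2)"
proof -
  have "Re (cnj (f x) * (\<Sum>\<^sub>\<infinity>y\<in>X. complex_of_real (b x y) * (f x - f y)))
      = (\<Sum>\<^sub>\<infinity>y\<in>X. Re (cnj (f x) * (complex_of_real (b x y) * (f x - f y))))"
  proof -
    have "cnj (f x) * (\<Sum>\<^sub>\<infinity>y\<in>X. complex_of_real (b x y) * (f x - f y))
        = (\<Sum>\<^sub>\<infinity>y\<in>X. cnj (f x) * (complex_of_real (b x y) * (f x - f y)))"
      by (rule infsum_cmult_right[symmetric]) (rule summable_on_Lap_terms[OF x f])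
    moreover have "(\<lambda>y. cnj (f x) * (complex_of_real (b x y) * (f x - f y))) summable_on X"
      by (rule summable_on_cmult_right) (rule summable_on_Lap_terms[OF x f])
    ultimately show ?thesis by (metis infsum_Re)
  qed
  also have "\<dots> = (\<Sum>\<^sub>\<infinity>y\<in>X. (1/2) * (b x y * (cmod (f x - f y))\<^sup>2)
      + (1/2) * (b x y * (cmod (f x))\<^sup>2) - (1/2) * (b x y * (cmod (f y))\<^sup>2))"
  proof (rule infsum_cong)
    fix y
    have "Re (cnj (f x) * (complex_of_real (b x y) * (f x - f y))) = b x y * Re (cnj (f x) * (f x - f y))"
      by (simp add: algebra_simps)
    thus "Re (cnj (f x) * (complex_of_real (b x y) * (f x - f y))) = (1/2) * (b x y * (cmod (f x - f y))\<^sup>2)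
        + (1/2) * (b x y * (cmod (f x))\<^sup>2) - (1/2) * (b x y * (cmod (f y))\<^sup>2)"
      by (simp only: Re_cnj_mult_diff) (simp add: algebra_simps)
  qed
  also have "\<dots> = (1/2) * energy_density f x + (1/2) * (\<Sum>\<^sub>\<infinity>y\<in>X. b x y * (cmod (f x))\<^sup>2)
      - (1/2) * (\<Sum>\<^sub>\<infinity>y\<in>X. b x y * (cmod (f y))\<^sup>2)"
    unfolding energy_density_def
    by (rule infsum_lincomb3[OF summable_on_energy_terms[OF x f]
          summable_on_cmult_left[OF summable_on_b[OF x]] summable_on_b_cmod_sq[OF x f]])
  also have "(\<Sum>\<^sub>\<infinity>y\<in>X. b x y * (cmod (f x))\<^sup>2) = (\<Sum>\<^sub>\<infinity>y\<in>X. b x y) * (cmod (f x))\<^sup>2"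
    using summable_on_b[OF x] by (rule infsum_cmult_left)
  finally show ?thesis .
qed

lemma inner_lap_ell2_eq_infsum:
  "inner (lap_ell2 v) v
    = (\<Sum>\<^sub>\<infinity>x\<in>X. Re (cnj (of_ell2 v x) * (\<Sum>\<^sub>\<infinity>y\<in>X. complex_of_real (b x y) * (of_ell2 v x - of_ell2 v y))))"
  unfolding inner_ell2_def
proof (rule infsum_cong_neutral)
  show "Re (ell2_apply (lap_ell2 v) x * cnj (ell2_apply v x)) = 0" if "x \<in> UNIV - X" for x
    using that by (simp add: lap_ell2_def ell2_apply_to_ell2 l2_summable_Lap l2_summable_of_ell2)
  show "Re (ell2_apply (lap_ell2 v) x * cnj (ell2_apply v x))
      = Re (cnj (of_ell2 v x) * (\<Sum>\<^sub>\<infinity>y\<in>X. complex_of_real (b x y) * (of_ell2 v x - of_ell2 v y)))"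
    if "x \<in> UNIV \<inter> X" for x
  proof -
    have x: "x \<in> X" using that by simp
    have "ell2_apply v x = complex_of_real (sqrt (m x)) * of_ell2 v x"
      using m_pos[OF x] by (simp add: of_ell2_def)
    moreover have "ell2_apply (lap_ell2 v) x = complex_of_real (sqrt (m x)) * Lap X b m (of_ell2 v) x"
      using x by (simp add: lap_ell2_def ell2_apply_to_ell2 l2_summable_Lap l2_summable_of_ell2)
    moreover have "complex_of_real (sqrt (m x)) * complex_of_real (sqrt (m x)) = complex_of_real (m x)"
      using m_pos[OF x] by (simp flip: of_real_mult)
    ultimately have "ell2_apply (lap_ell2 v) x * cnj (ell2_apply v x)
        = complex_of_real (m x) * (Lap X b m (of_ell2 v) x * cnj (of_ell2 v x))"
      by (simp add: algebra_simps)
    also have "\<dots> = cnj (of_ell2 v x) * (\<Sum>\<^sub>\<infinity>y\<in>X. complex_of_real (b x y) * (of_ell2 v x - of_ell2 v y))"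
      using m_pos[OF x] by (simp add: Lap_def field_simps)
    finally show ?thesis by simp
  qed
qed auto

lemma inner_lap_ell2: "inner (lap_ell2 v) v = energy (of_ell2 v) / 2"
proof -
  define f where "f = of_ell2 v"
  have f: "l2_summable f" unfolding f_def by (rule l2_summable_of_ell2)
  have "inner (lap_ell2 v) v = (\<Sum>\<^sub>\<infinity>x\<in>X. (1/2) * energy_density f x
      + (1/2) * ((\<Sum>\<^sub>\<infinity>y\<in>X. b x y) * (cmod (f x))\<^sup>2) - (1/2) * (\<Sum>\<^sub>\<infinity>y\<in>X. b x y * (cmod (f y))\<^sup>2))"
    unfolding inner_lap_ell2_eq_infsum f_def[symmetric]
    by (rule infsum_cong) (rule Re_cnj_mult_Lap_sum[OF _ f])
  also have "\<dots> = (1/2) * energy f + (1/2) * (\<Sum>\<^sub>\<infinity>x\<in>X. (\<Sum>\<^sub>\<infinity>y\<in>X. b x y) * (cmod (f x))\<^sup>2)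
      - (1/2) * (\<Sum>\<^sub>\<infinity>x\<in>X. \<Sum>\<^sub>\<infinity>y\<in>X. b x y * (cmod (f y))\<^sup>2)"
    unfolding energy_def
    by (rule infsum_lincomb3[OF summable_on_energy_density[OF f] summable_on_degree_cmod_sq[OF f]
          summable_on_infsum_b_cmod_sq[OF f]])
  also have "(\<Sum>\<^sub>\<infinity>x\<in>X. \<Sum>\<^sub>\<infinity>y\<in>X. b x y * (cmod (f y))\<^sup>2)
      = (\<Sum>\<^sub>\<infinity>x\<in>X. (\<Sum>\<^sub>\<infinity>y\<in>X. b x y) * (cmod (f x))\<^sup>2)"
    by (rule infsum_swap_b_cmod_sq[OF f])
  finally show ?thesis by (simp add: f_def)
qed

end

section \<open>A Poincare inequality relative to a relatively dense set\<close>

locale dense_control_set = bounded_weighted_graph X b m for X :: "'a set" and b m +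
  fixes D :: "'a set"
  assumes D_subset: "D \<subseteq> X"
    and connected: "graph_connected X b"
    and dense: "relatively_dense X (dL X b) D"
begin

definition "cover_radius = (SOME R. R > 0 \<and> (\<Union>x\<in>D. closed_ball_in X (dL X b) x R) = X)"

lemma cover_radius: "cover_radius > 0" "(\<Union>x\<in>D. closed_ball_in X (dL X b) x cover_radius) = X"
proof -
  have "\<exists>R. R > 0 \<and> (\<Union>x\<in>D. closed_ball_in X (dL X b) x R) = X"
    using dense by (simp add: relatively_dense_def)
  hence "cover_radius > 0 \<and> (\<Union>x\<in>D. closed_ball_in X (dL X b) x cover_radius) = X"
    unfolding cover_radius_def by (rule someI_ex)
  thus "cover_radius > 0" "(\<Union>x\<in>D. closed_ball_in X (dL X b) x cover_radius) = X" by auto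
qed

text \<open>The distance \<open>d\<^sub>L\<close> is an infimum, so only paths of length \<^emph>\<open>below\<close> \<open>cover_radius + 1\<close> are
  guaranteed to exist.  On such a path every edge has weight at least \<open>1 / reach\<close>, and since every
  edge weight is at most \<open>Dmax * Mmax\<close>, the path has at most \<open>max_hops\<close> edges.\<close>

definition "reach = cover_radius + 1"
definition "max_hops = nat \<lceil>reach * Dmax * Mmax\<rceil>"

lemma reach_pos: "reach > 0"
  using cover_radius by (simp add: reach_def)

definition heavy_path :: "'a list \<Rightarrow> bool" where
  "heavy_path xs \<longleftrightarrow> is_path X b xs \<and> (\<forall>i. Suc i < length xs \<longrightarrow> 1 / reach \<le> b (xs ! i) (xs ! Suc i))"

lemma short_path_from_D:
  assumes x: "x \<in> X"
  obtains xs where "is_path X b xs" "hd xs \<in> D" "last xs = x" "path_length b xs < reach"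
proof -
  obtain y where y: "y \<in> D" "dL X b y x \<le> cover_radius"
    using cover_radius(2) x by (auto simp: closed_ball_in_def)
  show ?thesis
  proof (cases "y = x")
    case True
    thus ?thesis
      using that[of "[x]"] x y reach_pos by (simp add: is_path_def path_length_def)
  next
    case False
    let ?P = "{path_length b xs | xs. path_from_to X b y x xs}"
    have "?P \<noteq> {}" using connected False y D_subset x by (auto simp: graph_connected_def)
    moreover have "Inf ?P < reach" using y False by (simp add: dL_def reach_def)
    ultimately obtain l where "l \<in> ?P" "l < reach"
      by (rule cInf_lessD[elim_format]) blast
    then obtain xs where "path_from_to X b y x xs" "path_length b xs < reach"
      by blast
    thus ?thesis using that y by (auto simp: path_from_to_def)
  qed
qed

lemma inverse_edge_le_path_length:
  assumes "is_path X b xs" "Suc i < length xs"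
  shows "1 / b (xs ! i) (xs ! Suc i) \<le> path_length b xs"
proof -
  have "(\<Sum>k\<in>{i}. 1 / b (xs ! k) (xs ! Suc k)) \<le> (\<Sum>k<length xs - 1. 1 / b (xs ! k) (xs ! Suc k))"
    by (rule sum_mono2) (use assms in \<open>auto simp: is_path_def intro: less_imp_le\<close>)
  thus ?thesis by (simp add: path_length_def)
qed

lemma heavy_path_if_short:
  assumes "is_path X b xs" "path_length b xs < reach"
  shows "heavy_path xs"
  unfolding heavy_path_def
proof (intro conjI allI impI)
  fix i assume i: "Suc i < length xs"
  have "1 / b (xs ! i) (xs ! Suc i) < reach"
    using inverse_edge_le_path_length[OF assms(1) i] assms(2) by simp
  moreover have "0 < b (xs ! i) (xs ! Suc i)" using assms(1) i by (simp add: is_path_def)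
  ultimately show "1 / reach \<le> b (xs ! i) (xs ! Suc i)"
    using reach_pos by (simp add: field_simps)
qed (rule assms(1))

lemma length_le_if_short:
  assumes path: "is_path X b xs" and short: "path_length b xs < reach"
  shows "length xs \<le> Suc max_hops"
proof -
  have inX: "xs ! k \<in> X" if "k < length xs" for k using path that by (auto simp: is_path_def)
  have edge: "1 / (Dmax * Mmax) \<le> 1 / b (xs ! i) (xs ! Suc i)" if i: "Suc i < length xs" for i
  proof -
    have "b (xs ! i) (xs ! Suc i) \<le> Dmax * m (xs ! i)" by (rule b_le) (use i inX in auto)
    also have "\<dots> \<le> Dmax * Mmax"
      using m_le_Mmax[of "xs ! i"] inX[of i] i Dmax_pos by (intro mult_left_mono) auto
    finally show ?thesis using path i by (intro divide_left_mono) (auto simp: is_path_def)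
  qed
  have "real (length xs - 1) * (1 / (Dmax * Mmax)) \<le> path_length b xs"
    unfolding path_length_def using sum_mono[of "{..<length xs - 1}", OF edge] by simp
  hence "real (length xs - 1) \<le> path_length b xs * (Dmax * Mmax)"
    using Dmax_pos Mmax_pos by (simp add: field_simps)
  also have "\<dots> < reach * (Dmax * Mmax)"
    using short Dmax_pos Mmax_pos by (intro mult_strict_right_mono) auto
  also have "\<dots> \<le> real max_hops"
    unfolding max_hops_def by (simp add: mult.assoc) linarith
  finally show ?thesis by linarith
qed

lemma heavy_path_exists:
  assumes "x \<in> X"
  obtains xs where "heavy_path xs" "hd xs \<in> D" "last xs = x" "length xs \<le> Suc max_hops"
proof -
  obtain xs where "is_path X b xs" "hd xs \<in> D" "last xs = x" "path_length b xs < reach"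
    by (rule short_path_from_D[OF assms])
  thus ?thesis using that heavy_path_if_short length_le_if_short by blast
qed

definition layer :: "nat \<Rightarrow> 'a set" where
  "layer j = {x \<in> X. \<exists>xs. heavy_path xs \<and> hd xs \<in> D \<and> last xs = x \<and> length xs \<le> Suc j}"

lemma layer_subset: "layer j \<subseteq> X"
  by (auto simp: layer_def)

lemma layer_max_hops: "layer max_hops = X"
  using heavy_path_exists by (auto simp: layer_def)

lemma heavy_path_nonempty: "heavy_path xs \<Longrightarrow> xs \<noteq> []"
  by (simp add: heavy_path_def is_path_def)

lemma layer_0_subset: "layer 0 \<subseteq> D"
proof
  fix x assume "x \<in> layer 0"
  then obtain xs where "heavy_path xs" "hd xs \<in> D" "last xs = x" "length xs \<le> 1"
    by (auto simp: layer_def)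
  thus "x \<in> D"
    using heavy_path_nonempty by (cases xs) auto
qed

lemma heavy_path_butlast:
  assumes "heavy_path xs" "length xs \<ge> 2"
  shows "heavy_path (butlast xs)"
  unfolding heavy_path_def is_path_def
proof (intro conjI allI impI)
  show "butlast xs \<noteq> []" using assms(2) by (cases xs) auto
  show "set (butlast xs) \<subseteq> X"
    using assms(1) in_set_butlastD by (fastforce simp: heavy_path_def is_path_def)
  fix i assume "Suc i < length (butlast xs)"
  thus "0 < b (butlast xs ! i) (butlast xs ! Suc i)" "1 / reach \<le> b (butlast xs ! i) (butlast xs ! Suc i)"
    using assms(1) by (auto simp: heavy_path_def is_path_def nth_butlast)
qed

lemma layer_parent:
  assumes "x \<in> layer (Suc j)" "x \<notin> D"
  obtains p where "p \<in> layer j" "1 / reach \<le> b p x"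
proof -
  obtain xs where xs: "heavy_path xs" "hd xs \<in> D" "last xs = x" "length xs \<le> Suc (Suc j)"
    using assms(1) by (auto simp: layer_def)
  define n where "n = length xs"
  have n: "n \<ge> 2"
    using xs assms(2) heavy_path_nonempty[OF xs(1)] unfolding n_def
    by (cases xs rule: rev_cases) (auto simp: Suc_le_eq hd_append split: if_splits)
  define p where "p = xs ! (n - 2)"
  have "heavy_path (butlast xs)" using heavy_path_butlast xs(1) n by (simp add: n_def)
  moreover have "hd (butlast xs) = hd xs" using n unfolding n_def by (cases xs) auto
  moreover have "butlast xs \<noteq> []" using n unfolding n_def by (cases xs) auto
  hence "last (butlast xs) = p" using n by (simp add: p_def n_def last_conv_nth nth_butlast numeral_2_eq_2)
  moreover have "length (butlast xs) \<le> Suc j" using xs(4) by simp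
  moreover have "p \<in> X" using xs(1) n by (auto simp: p_def n_def heavy_path_def is_path_def)
  ultimately have "p \<in> layer j" using xs(2) by (auto simp: layer_def)
  moreover have "xs ! (n - 1) = x"
    using xs(3) heavy_path_nonempty[OF xs(1)] by (simp add: last_conv_nth n_def)
  hence "xs ! Suc (n - 2) = x"
    using n by (simp add: Suc_diff_Suc numeral_2_eq_2)
  hence "1 / reach \<le> b p x" using xs(1) n by (auto simp: heavy_path_def p_def n_def)
  ultimately show ?thesis by (rule that)
qed

end
context bounded_weighted_graph
begin

lemma m_cmod_sq_le_neighbour:
  assumes "x \<in> X" "p \<in> X" "R > 0" "1 / R \<le> b x p"
  shows "m x * (cmod (f x))\<^sup>2 \<le> 2 * Mmax * R * (b x p * (cmod (f p))\<^sup>2 + b x p * (cmod (f x - f p))\<^sup>2)"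
proof -
  have one: "1 \<le> R * b x p" using assms(3,4) by (simp add: field_simps)
  have "m x * (cmod (f x))\<^sup>2 \<le> Mmax * (cmod (f x))\<^sup>2"
    using m_le_Mmax[OF assms(1)] by (simp add: mult_right_mono)
  also have "\<dots> \<le> Mmax * ((R * b x p) * (cmod (f x))\<^sup>2)"
    using one Mmax_pos by (intro mult_left_mono) (auto simp: mult_le_cancel_right1)
  also have "\<dots> \<le> Mmax * (R * b x p * (2 * (cmod (f p))\<^sup>2 + 2 * (cmod (f x - f p))\<^sup>2))"
    using power2_norm_add_le[of "f p" "f x - f p"] Mmax_pos assms(3) b_nonneg[OF assms(1,2)]
    by (intro mult_left_mono) auto
  also have "\<dots> = 2 * Mmax * R * (b x p * (cmod (f p))\<^sup>2 + b x p * (cmod (f x - f p))\<^sup>2)"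
    by (simp add: algebra_simps)
  finally show ?thesis .
qed

lemma infsum_b_cmod_sq_restrict_le:
  assumes f: "l2_summable f" and S: "S \<subseteq> X"
  shows "(\<Sum>\<^sub>\<infinity>x\<in>X. \<Sum>\<^sub>\<infinity>z\<in>X. b x z * (cmod (if z \<in> S then f z else 0))\<^sup>2) \<le> Dmax * l2_mass S f"
proof -
  have fS: "l2_summable (\<lambda>z. if z \<in> S then f z else 0)" by (rule l2_summable_restrict[OF f])
  have "l2_mass X (\<lambda>z. if z \<in> S then f z else 0) = l2_mass S f"
    by (rule infsum_cong_neutral) (use S in auto)
  thus ?thesis
    using infsum_degree_cmod_sq_le[OF fS] by (simp add: infsum_swap_b_cmod_sq[OF fS])
qed

end

context dense_control_set
begin

lemma m_cmod_sq_le_layer_step: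
  assumes x: "x \<in> layer (Suc j) - D" and f: "l2_summable f"
  shows "m x * (cmod (f x))\<^sup>2
    \<le> 2 * Mmax * reach * ((\<Sum>\<^sub>\<infinity>z\<in>X. b x z * (cmod (if z \<in> layer j then f z else 0))\<^sup>2) + energy_density f x)"
proof -
  define fj where "fj z = (if z \<in> layer j then f z else 0)" for z
  have xX: "x \<in> X" using x layer_subset by auto
  obtain p where p: "p \<in> layer j" "1 / reach \<le> b p x" using layer_parent[of x j] x by auto
  have pX: "p \<in> X" using p layer_subset by auto
  have "m x * (cmod (f x))\<^sup>2
      \<le> 2 * Mmax * reach * (b x p * (cmod (fj p))\<^sup>2 + b x p * (cmod (f x - f p))\<^sup>2)"
    using m_cmod_sq_le_neighbour[OF xX pX reach_pos] p b_sym[OF xX pX] by (simp add: fj_def)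
  also have "\<dots> \<le> 2 * Mmax * reach * ((\<Sum>\<^sub>\<infinity>z\<in>X. b x z * (cmod (fj z))\<^sup>2) + energy_density f x)"
  proof (intro mult_left_mono add_mono)
    have "(\<Sum>z\<in>{p}. b x z * (cmod (fj z))\<^sup>2) \<le> (\<Sum>\<^sub>\<infinity>z\<in>X. b x z * (cmod (fj z))\<^sup>2)"
      using summable_on_b_cmod_sq[OF xX l2_summable_restrict[OF f]] b_nonneg[OF xX] pX
      by (intro finite_sum_le_infsum) (auto simp: fj_def)
    thus "b x p * (cmod (fj p))\<^sup>2 \<le> (\<Sum>\<^sub>\<infinity>z\<in>X. b x z * (cmod (fj z))\<^sup>2)" by simp
    show "b x p * (cmod (f x - f p))\<^sup>2 \<le> energy_density f x"
      by (rule b_cmod_diff_sq_le_energy_density[OF xX pX f])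
  qed (use Mmax_pos reach_pos in auto)
  finally show ?thesis by (simp add: fj_def)
qed

lemma l2_mass_layer_Suc_diff_le:
  assumes f: "l2_summable f"
  shows "l2_mass (layer (Suc j) - D) f \<le> 2 * Mmax * reach * (Dmax * l2_mass (layer j) f + energy f)"
proof -
  define c where "c = 2 * Mmax * reach"
  define G where "G x = (\<Sum>\<^sub>\<infinity>z\<in>X. b x z * (cmod (if z \<in> layer j then f z else 0))\<^sup>2)" for x
  have c: "0 \<le> c" using Mmax_pos reach_pos by (simp add: c_def)
  have G: "G summable_on X" "\<And>x. x \<in> X \<Longrightarrow> 0 \<le> G x"
    unfolding G_def using summable_on_infsum_b_cmod_sq[OF l2_summable_restrict[OF f]]
    by (auto intro!: infsum_nonneg simp: b_nonneg)
  have E: "energy_density f summable_on X" by (rule summable_on_energy_density[OF f])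
  have "l2_mass (layer (Suc j) - D) f \<le> (\<Sum>\<^sub>\<infinity>x\<in>X. c * (G x + energy_density f x))"
  proof (rule infsum_mono_neutral)
    show "(\<lambda>x. m x * (cmod (f x))\<^sup>2) summable_on layer (Suc j) - D"
      by (rule l2_summable_subset[OF f]) (use layer_subset in auto)
    show "(\<lambda>x. c * (G x + energy_density f x)) summable_on X"
      by (intro summable_on_cmult_right summable_on_add G E)
  qed (use m_cmod_sq_le_layer_step[OF _ f] layer_subset c G energy_density_nonneg
      in \<open>auto simp: c_def G_def\<close>)
  also have "\<dots> = c * ((\<Sum>\<^sub>\<infinity>x\<in>X. G x) + energy f)"
    unfolding energy_def using G E
    by (simp add: infsum_cmult_right summable_on_add infsum_add)
  also have "\<dots> \<le> c * (Dmax * l2_mass (layer j) f + energy f)"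
    using infsum_b_cmod_sq_restrict_le[OF f layer_subset] c
    by (intro mult_left_mono add_right_mono) (simp_all add: G_def)
  finally show ?thesis by (simp add: c_def)
qed

lemma l2_mass_layer_Suc_le:
  assumes f: "l2_summable f"
  shows "l2_mass (layer (Suc j)) f \<le> l2_mass D f + 2 * Mmax * reach * (Dmax * l2_mass (layer j) f + energy f)"
proof -
  have "l2_mass (layer (Suc j)) f = l2_mass (layer (Suc j) \<inter> D) f + l2_mass (layer (Suc j) - D) f"
  proof -
    have "layer (Suc j) = (layer (Suc j) \<inter> D) \<union> (layer (Suc j) - D)" by auto
    hence "l2_mass (layer (Suc j)) f = l2_mass ((layer (Suc j) \<inter> D) \<union> (layer (Suc j) - D)) f"
      by simp
    also have "\<dots> = l2_mass (layer (Suc j) \<inter> D) f + l2_mass (layer (Suc j) - D) f"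
      by (rule infsum_Un_disjoint)
        (auto intro!: l2_summable_subset[OF f] simp: layer_subset[THEN subsetD])
    finally show ?thesis .
  qed
  moreover have "l2_mass (layer (Suc j) \<inter> D) f \<le> l2_mass D f"
    by (rule infsum_mono_neutral)
      (auto intro!: l2_summable_subset[OF f] m_cmod_sq_nonneg simp: D_subset[THEN subsetD])
  ultimately show ?thesis using l2_mass_layer_Suc_diff_le[OF f, of j] by linarith
qed

primrec layer_const :: "nat \<Rightarrow> real" where
  "layer_const 0 = 1"
| "layer_const (Suc j) = 1 + 2 * Mmax * reach * (Dmax * layer_const j + 1)"

lemma layer_const_pos: "0 < layer_const j"
  by (induction j) (use Mmax_pos reach_pos Dmax_pos in \<open>auto intro!: add_pos_nonneg mult_nonneg_nonneg\<close>)

lemma l2_mass_layer_le: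
  assumes f: "l2_summable f"
  shows "l2_mass (layer j) f \<le> layer_const j * (energy f + l2_mass D f)"
proof (induction j)
  case 0
  have "l2_mass (layer 0) f \<le> l2_mass D f"
    by (rule infsum_mono_neutral)
      (auto intro!: l2_summable_subset[OF f] m_cmod_sq_nonneg
        simp: D_subset[THEN subsetD] layer_0_subset[THEN subsetD] layer_subset[THEN subsetD])
  thus ?case using energy_nonneg[of f] by simp
next
  case (Suc j)
  define E where "E = energy f"
  define N where "N = l2_mass D f"
  have E0: "0 \<le> E" unfolding E_def by (rule energy_nonneg)
  have N0: "0 \<le> N" unfolding N_def by (rule l2_mass_nonneg[OF D_subset])
  have c0: "0 \<le> 2 * Mmax * reach" using Mmax_pos reach_pos by simp
  have "l2_mass (layer (Suc j)) f \<le> N + 2 * Mmax * reach * (Dmax * l2_mass (layer j) f + E)"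
    using l2_mass_layer_Suc_le[OF f, of j] by (simp add: E_def N_def)
  also have "\<dots> \<le> N + 2 * Mmax * reach * (Dmax * (layer_const j * (E + N)) + E)"
    using Suc.IH c0 Dmax_pos by (simp add: E_def N_def mult_left_mono)
  also have "\<dots> \<le> (E + N) + 2 * Mmax * reach * (Dmax * layer_const j * (E + N) + (E + N))"
    using E0 N0 c0 by (intro add_mono mult_left_mono) (auto simp: mult.assoc)
  also have "\<dots> = layer_const (Suc j) * (E + N)" by (simp add: algebra_simps)
  finally show ?case by (simp add: E_def N_def)
qed

definition "poincare_const = layer_const max_hops"

lemma poincare_const_pos: "0 < poincare_const"
  by (simp add: poincare_const_def layer_const_pos)

theorem poincare_inequality:
  assumes "l2_summable f"
  shows "l2_mass X f \<le> poincare_const * (energy f + l2_mass D f)"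
  using l2_mass_layer_le[OF assms, of max_hops] by (simp add: layer_max_hops poincare_const_def)

end

section \<open>Null-controllability by a feedback control\<close>

context dense_control_set
begin

text \<open>The ambient \<open>\<ell>\<^sup>2\<close> also has the coordinates outside \<open>X\<close>, on which \<open>H\<close> vanishes; damping
  them as well makes \<open>A = H + 1\<^sub>D\<close> coercive on the whole space without affecting \<open>X\<close>.\<close>

definition "damped_set = D \<union> - X"
definition "A_op = H_op + proj_op damped_set"

lemma op_apply_A_op: "op_apply A_op v = lap_ell2 v + ell2_restrict damped_set v"
  by (simp add: A_op_def op_apply_simps op_apply_H_op op_apply_proj_op)

lemma inner_A_op:
  "inner (op_apply A_op v) v = energy (of_ell2 v) / 2
    + (\<Sum>\<^sub>\<infinity>x\<in>D. (cmod (ell2_apply v x))\<^sup>2) + (\<Sum>\<^sub>\<infinity>x\<in>-X. (cmod (ell2_apply v x))\<^sup>2)"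
proof -
  have "inner (ell2_restrict damped_set v) v = (\<Sum>\<^sub>\<infinity>x\<in>D \<union> -X. (cmod (ell2_apply v x))\<^sup>2)"
    by (simp add: inner_restrict_self damped_set_def)
  also have "\<dots> = (\<Sum>\<^sub>\<infinity>x\<in>D. (cmod (ell2_apply v x))\<^sup>2) + (\<Sum>\<^sub>\<infinity>x\<in>-X. (cmod (ell2_apply v x))\<^sup>2)"
    by (rule infsum_Un_disjoint) (use D_subset in \<open>auto simp: summable_on_ell2_sq\<close>)
  finally show ?thesis by (simp add: op_apply_A_op inner_add_left inner_lap_ell2)
qed

definition "coercivity_const = 1 / (2 * poincare_const + 1)"

lemma coercivity_const_pos: "0 < coercivity_const"
  using poincare_const_pos by (simp add: coercivity_const_def)

lemma A_op_coercive: "coercivity_const * (norm v)\<^sup>2 \<le> inner (op_apply A_op v) v"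
proof -
  define E where "E = energy (of_ell2 v)"
  define ND where "ND = (\<Sum>\<^sub>\<infinity>x\<in>D. (cmod (ell2_apply v x))\<^sup>2)"
  define NO where "NO = (\<Sum>\<^sub>\<infinity>x\<in>-X. (cmod (ell2_apply v x))\<^sup>2)"
  have E0: "0 \<le> E" and ND0: "0 \<le> ND" and NO0: "0 \<le> NO"
    unfolding E_def ND_def NO_def by (auto intro!: infsum_nonneg energy_nonneg)
  have "l2_mass X (of_ell2 v) \<le> poincare_const * (E + l2_mass D (of_ell2 v))"
    unfolding E_def by (rule poincare_inequality[OF l2_summable_of_ell2])
  moreover have "l2_mass S (of_ell2 v) = (\<Sum>\<^sub>\<infinity>x\<in>S. (cmod (ell2_apply v x))\<^sup>2)" if "S \<subseteq> X" for S
    using that by (intro infsum_cong) (auto simp: m_cmod_of_ell2_sq)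
  ultimately have "(\<Sum>\<^sub>\<infinity>x\<in>X. (cmod (ell2_apply v x))\<^sup>2) \<le> poincare_const * (E + ND)"
    using D_subset by (simp add: ND_def)
  hence "(norm v)\<^sup>2 \<le> poincare_const * (E + ND) + NO"
    by (simp add: power2_norm_split[of v X] NO_def)
  also have "\<dots> \<le> (2 * poincare_const + 1) * (E / 2 + ND + NO)"
    using poincare_const_pos E0 ND0 NO0 by (simp add: algebra_simps)
  finally show ?thesis
    using poincare_const_pos
    by (simp add: coercivity_const_def inner_A_op E_def ND_def NO_def field_simps)
qed

definition orbit :: "'a ell2 \<Rightarrow> real \<Rightarrow> 'a ell2" where
  "orbit v0 \<tau> = op_apply (exp ((-\<tau>) *\<^sub>R A_op)) v0"

definition feedback_control :: "'a ell2 \<Rightarrow> real \<Rightarrow> 'a \<Rightarrow> complex" where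
  "feedback_control v0 \<tau> x = - ell2_apply (orbit v0 \<tau>) x / complex_of_real (sqrt (m x))"

lemma m_cmod_feedback_control_sq:
  "x \<in> X \<Longrightarrow> m x * (cmod (feedback_control v0 \<tau> x))\<^sup>2 = (cmod (ell2_apply (orbit v0 \<tau>) x))\<^sup>2"
  using m_pos[of x] by (simp add: feedback_control_def norm_divide power_divide)

lemma l2_summable_ext0_feedback_control: "l2_summable (ext0 D (feedback_control v0 \<tau>))"
  unfolding l2_summable_def
proof (rule summable_on_comparison_test[OF summable_on_ell2_sq[of "orbit v0 \<tau>" X]])
  show "m x * (cmod (ext0 D (feedback_control v0 \<tau>) x))\<^sup>2 \<le> (cmod (ell2_apply (orbit v0 \<tau>) x))\<^sup>2"
    if "x \<in> X" for x
    using m_cmod_feedback_control_sq[OF that] by (simp add: ext0_def)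
qed (rule m_cmod_sq_nonneg)

lemma to_ell2_ext0_feedback_control:
  "to_ell2 (ext0 D (feedback_control v0 \<tau>)) = - ell2_restrict D (orbit v0 \<tau>)"
proof (rule ell2_eqI)
  fix x
  show "ell2_apply (to_ell2 (ext0 D (feedback_control v0 \<tau>))) x = ell2_apply (- ell2_restrict D (orbit v0 \<tau>)) x"
    unfolding ell2_apply_to_ell2[OF l2_summable_ext0_feedback_control]
    using m_pos[of x] D_subset by (auto simp: ell2_apply_restrict ext0_def feedback_control_def)
qed

lemma op_apply_exp_H_op_outside:
  assumes "\<And>x. x \<in> X \<Longrightarrow> ell2_apply w x = 0"
  shows "op_apply (exp (t *\<^sub>R H_op)) w = w"
proof (rule op_apply_exp_scaleR_fixed)
  have "lap_ell2 w = to_ell2 (\<lambda>_. 0)"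
    unfolding lap_ell2_def
  proof (rule to_ell2_cong)
    fix x assume x: "x \<in> X"
    have "(\<Sum>\<^sub>\<infinity>y\<in>X. complex_of_real (b x y) * (of_ell2 w x - of_ell2 w y)) = 0"
      by (rule infsum_0) (simp add: of_ell2_def assms x)
    thus "Lap X b m (of_ell2 w) x = 0" by (simp add: Lap_def)
  qed
  also have "\<dots> = 0" by (rule ell2_eqI) (simp add: ell2_apply_to_ell2 l2_summable_def)
  finally show "op_apply H_op w = 0" by (simp add: op_apply_H_op)
qed

lemma duhamel_integrand:
  assumes x: "x \<in> X"
  shows "op_coord v0 x (- (exp ((\<tau> - T) *\<^sub>R H_op) * proj_op damped_set * exp ((-\<tau>) *\<^sub>R A_op)))
    = heat_sg X b m (T - \<tau>) (ext0 D (feedback_control v0 \<tau>)) x"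
proof -
  define w where "w = orbit v0 \<tau>"
  have split: "ell2_restrict damped_set w = ell2_restrict D w + ell2_restrict (-X) w"
    by (rule ell2_eqI) (use D_subset in \<open>auto simp: ell2_apply_restrict damped_set_def\<close>)
  have outside: "op_apply (exp ((\<tau> - T) *\<^sub>R H_op)) (ell2_restrict (-X) w) = ell2_restrict (-X) w"
    by (rule op_apply_exp_H_op_outside) (simp add: ell2_apply_restrict)
  have "op_apply (exp ((-\<tau>) *\<^sub>R A_op)) v0 = w" by (simp add: w_def orbit_def)
  hence "op_apply (- (exp ((\<tau> - T) *\<^sub>R H_op) * proj_op damped_set * exp ((-\<tau>) *\<^sub>R A_op))) v0
      = - (op_apply (exp ((\<tau> - T) *\<^sub>R H_op)) (ell2_restrict D w) + ell2_restrict (-X) w)"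
    by (simp only: op_apply_simps op_apply_proj_op split blinfun.add_right outside)
  hence "op_coord v0 x (- (exp ((\<tau> - T) *\<^sub>R H_op) * proj_op damped_set * exp ((-\<tau>) *\<^sub>R A_op)))
      = - (ell2_apply (op_apply (exp ((\<tau> - T) *\<^sub>R H_op)) (ell2_restrict D w)) x
          / complex_of_real (sqrt (m x)))"
    using x unfolding op_coord_def by (simp add: ell2_apply_restrict)
  also have "\<dots> = op_coord (to_ell2 (ext0 D (feedback_control v0 \<tau>))) x (exp ((-(T - \<tau>)) *\<^sub>R H_op))"
    unfolding op_coord_def to_ell2_ext0_feedback_control w_def by (simp add: blinfun.minus_right)
  also have "\<dots> = heat_sg X b m (T - \<tau>) (ext0 D (feedback_control v0 \<tau>)) x"
    by (rule heat_sg_eq_exp[OF l2_summable_ext0_feedback_control x, symmetric])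
  finally show ?thesis .
qed

lemma mild_sol_feedback:
  assumes f0: "l2_summable f0" and x: "x \<in> X" and T: "0 \<le> T"
  shows "mild_sol X b m D f0 (feedback_control (to_ell2 f0)) T x
    = ell2_apply (orbit (to_ell2 f0) T) x / complex_of_real (sqrt (m x))"
proof -
  define v0 where "v0 = to_ell2 f0"
  define F where "F \<tau> = op_coord v0 x (exp ((\<tau> - T) *\<^sub>R H_op) * exp ((-\<tau>) *\<^sub>R (H_op + proj_op damped_set)))" for \<tau>
  define F' where "F' \<tau> = op_coord v0 x
      (- (exp ((\<tau> - T) *\<^sub>R H_op) * proj_op damped_set * exp ((-\<tau>) *\<^sub>R (H_op + proj_op damped_set))))" for \<tau>
  have "(F has_vector_derivative F' \<tau>) (at \<tau> within S)" for \<tau> S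
    unfolding F_def F'_def
    by (rule bounded_linear.has_vector_derivative[OF bounded_linear_op_coord
          has_vector_derivative_exp_perturbation])
  moreover have "continuous_on {0..T} F'"
    unfolding F'_def
    by (intro bounded_linear.continuous_on[OF bounded_linear_op_coord] continuous_intros)
  ultimately have "interval_lebesgue_integral lborel (ereal 0) (ereal T) F' = F T - F 0"
    using T by (intro interval_integral_FTC_finite) auto
  moreover have "F T = ell2_apply (orbit v0 T) x / complex_of_real (sqrt (m x))"
    by (simp add: F_def op_coord_def orbit_def A_op_def op_apply_simps)
  moreover have "F 0 = heat_sg X b m T f0 x"
    by (simp add: F_def v0_def heat_sg_eq_exp[OF f0 x] op_apply_simps)
  moreover have "F' = (\<lambda>\<tau>. heat_sg X b m (T - \<tau>) (ext0 D (feedback_control v0 \<tau>)) x)"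
    unfolding F'_def A_op_def[symmetric] by (rule ext) (rule duhamel_integrand[OF x])
  ultimately show ?thesis
    using T by (simp add: mild_sol_def interval_lebesgue_integral_def v0_def)
qed

end

lemma enn_powr_le_ennreal:
  assumes "I \<le> ennreal y" "0 \<le> y" "0 \<le> q"
  shows "enn_powr I q \<le> ennreal (y powr q)"
proof -
  have "I \<noteq> \<infinity>" using assms(1) by (auto simp: top_unique)
  moreover have "enn2real I \<le> y"
    using enn2real_mono[OF assms(1)] assms(2) by simp
  hence "enn2real I powr q \<le> y powr q" using assms(3) by (simp add: powr_mono2)
  ultimately show ?thesis by (simp add: enn_powr_def)
qed

lemma powr_inverse_le_max:
  fixes T p :: real
  assumes "0 \<le> T" "1 \<le> p"
  shows "T powr (1 / p) \<le> max 1 T"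
proof (cases "T \<le> 1")
  case True
  thus ?thesis using powr_le1[of "1 / p" T] assms by auto
next
  case False
  hence "T powr (1 / p) \<le> T powr 1" using assms by (intro powr_mono) auto
  thus ?thesis using False by simp
qed

lemma Lr_norm_le_bound:
  assumes T: "0 < T" and r: "1 \<le> r" and meas: "g \<in> borel_measurable lborel"
    and bound: "\<And>\<tau>. \<tau> \<in> {0<..<T} \<Longrightarrow> g \<tau> \<le> ennreal B" and B: "0 \<le> B"
  shows "Lr_norm r T g \<le> ennreal (B * max 1 T)"
proof (cases "r = \<infinity>")
  case True
  have "esssup (restrict_space lborel {0<..<T}) g \<le> ennreal B"
    using meas bound
    by (intro esssup_I measurable_restrict_space1 AE_I2) (auto simp: space_restrict_space)
  also have "ennreal B \<le> ennreal (B * max 1 T)"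
    using B by (intro ennreal_leI) (simp add: mult_le_cancel_left1)
  finally show ?thesis using True by (simp add: Lr_norm_def)
next
  case False
  define p where "p = enn2real r"
  have p: "1 \<le> p"
    using enn2real_mono[OF r] False by (simp add: p_def top.not_eq_extremum)
  have "enn_powr (g \<tau>) p * indicator {0<..<T} \<tau> \<le> ennreal (B powr p) * indicator {0<..<T} \<tau>" for \<tau>
    using enn_powr_le_ennreal[OF bound B, of \<tau> p] p by (cases "\<tau> \<in> {0<..<T}") auto
  hence "(\<integral>\<^sup>+\<tau>\<in>{0<..<T}. enn_powr (g \<tau>) p \<partial>lborel) \<le> (\<integral>\<^sup>+\<tau>. ennreal (B powr p) * indicator {0<..<T} \<tau> \<partial>lborel)"
    by (intro nn_integral_mono) auto
  also have "\<dots> = ennreal (B powr p * T)"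
    using T by (simp add: nn_integral_cmult_indicator ennreal_mult)
  finally have "Lr_norm r T g \<le> ennreal ((B powr p * T) powr (1 / p))"
    unfolding Lr_norm_def using False T B p by (simp add: p_def enn_powr_le_ennreal)
  also have "(B powr p * T) powr (1 / p) = B * T powr (1 / p)"
    using B T p by (simp add: powr_mult powr_powr)
  also have "ennreal (B * T powr (1 / p)) \<le> ennreal (B * max 1 T)"
    using B powr_inverse_le_max[of T p] T p by (intro ennreal_leI mult_left_mono) auto
  finally show ?thesis .
qed

context dense_control_set
begin

lemma continuous_on_orbit: "continuous_on S (orbit v0)"
  unfolding orbit_def
  by (intro bounded_linear.continuous_on[OF bounded_linear_op_apply_left] continuous_intros)

lemma norm_orbit_le: "norm (orbit v0 \<tau>) \<le> exp (\<bar>\<tau>\<bar> * norm A_op) * norm v0"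
proof -
  have "norm (orbit v0 \<tau>) \<le> norm (exp ((-\<tau>) *\<^sub>R A_op)) * norm v0"
    unfolding orbit_def by (rule norm_op_apply_le)
  also have "\<dots> \<le> exp (norm ((-\<tau>) *\<^sub>R A_op)) * norm v0"
    by (intro mult_right_mono norm_exp) auto
  finally show ?thesis by simp
qed

lemma l2norm_feedback_control:
  "l2norm m D (feedback_control v0 \<tau>) = ennreal (norm (ell2_restrict D (orbit v0 \<tau>)))"
proof -
  have eq: "m x * (cmod (feedback_control v0 \<tau> x))\<^sup>2 = (cmod (ell2_apply (orbit v0 \<tau>) x))\<^sup>2"
    if "x \<in> D" for x
    using that D_subset m_cmod_feedback_control_sq by blast
  have "(\<lambda>x. m x * (cmod (feedback_control v0 \<tau> x))\<^sup>2) summable_on D"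
    by (subst summable_on_cong[OF eq]) (simp_all add: summable_on_ell2_sq)
  hence "l2norm m D (feedback_control v0 \<tau>) = ennreal (sqrt (l2_mass D (feedback_control v0 \<tau>)))"
    by (rule l2norm_eq_sqrt_infsum[OF D_subset])
  also have "l2_mass D (feedback_control v0 \<tau>) = (norm (ell2_restrict D (orbit v0 \<tau>)))\<^sup>2"
    unfolding power2_norm_restrict by (rule infsum_cong) (rule eq)
  finally show ?thesis by simp
qed

lemma feedback_control_measurable: "(\<lambda>\<tau>. feedback_control v0 \<tau> x) \<in> borel_measurable lborel"
proof -
  have "continuous_on UNIV (\<lambda>\<tau>. feedback_control v0 \<tau> x)"
    unfolding feedback_control_def divide_inverse
    by (intro continuous_intros continuous_on_orbit
        bounded_linear.continuous_on[OF bounded_linear_ell2_apply])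
  thus ?thesis by (simp add: borel_measurable_continuous_onI)
qed

lemma Lr_norm_feedback_control_le:
  assumes "0 < T" "1 \<le> r"
  shows "Lr_norm r T (\<lambda>\<tau>. l2norm m D (feedback_control v0 \<tau>))
    \<le> ennreal (exp (T * norm A_op) * max 1 T * norm v0)"
proof -
  have "continuous_on UNIV (\<lambda>\<tau>. norm (ell2_restrict D (orbit v0 \<tau>)))"
    by (intro continuous_on_norm bounded_linear.continuous_on[OF bounded_linear_restrict]
        continuous_on_orbit)
  hence "(\<lambda>\<tau>. l2norm m D (feedback_control v0 \<tau>)) \<in> borel_measurable lborel"
    unfolding l2norm_feedback_control by (simp add: borel_measurable_continuous_onI)
  moreover have "l2norm m D (feedback_control v0 \<tau>) \<le> ennreal (exp (T * norm A_op) * norm v0)"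
    if "\<tau> \<in> {0<..<T}" for \<tau>
  proof -
    have "norm (ell2_restrict D (orbit v0 \<tau>)) \<le> norm (orbit v0 \<tau>)"
      by (rule norm_restrict_le)
    also have "\<dots> \<le> exp (\<bar>\<tau>\<bar> * norm A_op) * norm v0"
      by (rule norm_orbit_le)
    also have "\<dots> \<le> exp (T * norm A_op) * norm v0"
      using that by (intro mult_right_mono) (auto intro!: mult_right_mono)
    finally show ?thesis by (simp add: l2norm_feedback_control ennreal_leI)
  qed
  ultimately have "Lr_norm r T (\<lambda>\<tau>. l2norm m D (feedback_control v0 \<tau>))
      \<le> ennreal ((exp (T * norm A_op) * norm v0) * max 1 T)"
    by (intro Lr_norm_le_bound[OF assms]) auto
  thus ?thesis by (simp add: mult_ac)
qed

lemma l2norm_mild_sol_feedback_le: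
  assumes f0: "l2_summable f0" and T: "0 \<le> T"
  shows "l2norm m X (mild_sol X b m D f0 (feedback_control (to_ell2 f0)) T)
    \<le> ennreal (norm (orbit (to_ell2 f0) T))"
proof -
  define u where "u = mild_sol X b m D f0 (feedback_control (to_ell2 f0)) T"
  define g where "g = orbit (to_ell2 f0) T"
  have eq: "m x * (cmod (u x))\<^sup>2 = (cmod (ell2_apply g x))\<^sup>2" if "x \<in> X" for x
    using mild_sol_feedback[OF f0 that T] m_pos[OF that]
    by (simp add: u_def g_def norm_divide power_divide)
  have "(\<lambda>x. m x * (cmod (u x))\<^sup>2) summable_on X"
    by (subst summable_on_cong[OF eq]) (simp_all add: summable_on_ell2_sq)
  hence "l2norm m X u = ennreal (sqrt (l2_mass X u))"
    by (rule l2norm_eq_sqrt_infsum[OF order_refl])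
  also have "l2_mass X u = (norm (ell2_restrict X g))\<^sup>2"
    unfolding power2_norm_restrict by (rule infsum_cong) (rule eq)
  finally show ?thesis
    using norm_restrict_le[of X g] by (simp add: u_def g_def ennreal_leI)
qed

theorem controllable_by_feedback:
  assumes "0 < \<alpha>" "1 \<le> r"
  shows "\<exists>T>0. \<exists>K\<ge>0. controllable X b m D \<alpha> T r K"
proof -
  obtain T where T: "T > 0" "norm (exp ((-T) *\<^sub>R A_op)) \<le> \<alpha>"
    by (rule exp_decay_if_coercive[OF coercivity_const_pos A_op_coercive assms(1)])
  define K where "K = exp (T * norm A_op) * max 1 T"
  have "controllable X b m D \<alpha> T r K"
    unfolding controllable_def
  proof (intro allI impI exI conjI ballI)
    fix f0 assume "in_l2 m X f0"
    hence f0: "l2_summable f0" by (simp add: in_l2_iff_l2_summable)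
    have norm_f0: "l2norm m X f0 = ennreal (norm (to_ell2 f0))"
      by (rule l2norm_eq_norm_to_ell2[OF f0])
    show "(\<lambda>\<tau>. feedback_control (to_ell2 f0) \<tau> x) \<in> borel_measurable lborel" for x
      by (rule feedback_control_measurable)
    show "Lr_norm r T (\<lambda>\<tau>. l2norm m D (feedback_control (to_ell2 f0) \<tau>)) \<le> ennreal K * l2norm m X f0"
      using Lr_norm_feedback_control_le[OF T(1) assms(2), of "to_ell2 f0"]
      by (simp add: norm_f0 K_def ennreal_mult)
    have "norm (orbit (to_ell2 f0) T) \<le> norm (exp ((-T) *\<^sub>R A_op)) * norm (to_ell2 f0)"
      unfolding orbit_def by (rule norm_op_apply_le)
    also have "\<dots> \<le> \<alpha> * norm (to_ell2 f0)"
      using T(2) by (rule mult_right_mono) simp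
    finally have "ennreal (norm (orbit (to_ell2 f0) T)) \<le> ennreal (\<alpha> * norm (to_ell2 f0))"
      by (rule ennreal_leI)
    with l2norm_mild_sol_feedback_le[OF f0 less_imp_le[OF T(1)]]
    have "l2norm m X (mild_sol X b m D f0 (feedback_control (to_ell2 f0)) T)
        \<le> ennreal (\<alpha> * norm (to_ell2 f0))"
      by (rule order.trans)
    thus "l2norm m X (mild_sol X b m D f0 (feedback_control (to_ell2 f0)) T) \<le> ennreal \<alpha> * l2norm m X f0"
      using assms(1) by (simp add: norm_f0 ennreal_mult)
  qed
  moreover have "K \<ge> 0" by (simp add: K_def)
  ultimately show ?thesis using T(1) by blast
qed

end

theorem mainTheorem1:
  fixes X :: "'a set" and b :: "'a \<Rightarrow> 'a \<Rightarrow> real" and m :: "'a \<Rightarrow> real"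
    and D :: "'a set" and \<alpha> :: real and r :: ennreal
  assumes "weighted_graph X b m"
    and "graph_connected X b"
    and "bounded_degree X b m"
    and "bounded_measure X m"
    and "D \<subset> X"
    and "relatively_dense X (dL X b) D"
    and "\<alpha> > 0"
    and "1 \<le> r"
  shows "\<exists>T>0. \<exists>K\<ge>0. controllable X b m D \<alpha> T r K"
proof -
  interpret dense_control_set X b m D
    by unfold_locales (use assms in auto)
  show ?thesis using controllable_by_feedback assms(7,8) by blast
qed

end
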